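(* Suppose $L=cW$ with $c\in\mathbb{C}\setminus\{0\}$ and $W\in\mathbb{C}^{p\times p}$ unitary. Let $\mathcal A\in\mathbb{C}_p^{I_1\times\cdots\times I_N}$. For each $n$ let $\mathcal A_{(n)}=\mathcal U_n*\Sigma_n*\mathcal V_n^H$ be the t-SVD of the mode-$n$ unfolding, let $R_n$ be the t-rank of $\mathcal A_{(n)}$, let $\sigma^{(n)}_1,\dots,\sigma^{(n)}_{R_n}$ be the Frobenius norms of the nonzero diagonal tubal scalars $\Sigma_n(i,i)$, and fix integers $1\le I_n'\le R_n$. Define $\widehat{\mathcal U}_1,\dots,\widehat{\mathcal U}_N$ recursively: $\widehat{\mathcal U}_n\in\mathbb{C}_p^{I_n\times I_n'}$ is formed by the first $I_n'$ columns of the left unitary factor of the t-SVD of the tubal matrix $\big(\mathcal A*_1\widehat{\mathcal U}_1^H\cdots*_{n-1}\widehat{\mathcal U}_{n-1}^H\big)_{(n)}$ (for $n=1$, of $\mathcal A_{(1)}$). Let $\widehat{\mathcal S}=\mathcal A*_1\widehat{\mathcal U}_1^H\cdots*_N\widehat{\mathcal U}_N^H$ and $\widehat{\mathcal A}=\widehat{\mathcal S}*_1\widehat{\mathcal U}_1\cdots*_N\widehat{\mathcal U}_N$. Then $$\|\mathcal A-\widehat{\mathcal A}\|\le\sqrt{\sum_{n=1}^N\sum_{i=I_n'+1}^{R_n}(\sigma^{(n)}_i)^2}\le\sqrt N\,\big\|\mathcal A-\mathcal S*_1\mathcal W_1\cdots*_N\mathcal W_N\big\|$$ for every $\mathcal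 S\in\mathbb{C}_p^{I_1'\times\cdots\times I_N'}$ and all $\mathcal W_n\in\mathbb{C}_p^{I_n\times I_n'}$ with $\mathcal W_n^H*\mathcal W_n=\mathcal I_{I_n'}$.
   Context: Fix an integer $p\ge1$ and an invertible linear map $L:\mathbb{C}^p\to\mathbb{C}^p$. A tubal scalar is an element of $\mathbb{C}_p:=\mathbb{C}^p$. The tensor-tensor product of tubal scalars is $\mathbf a*\mathbf b=L^{-1}(L(\mathbf a)\odot L(\mathbf b))$, where $\odot$ is the componentwise product. A tubal matrix $\mathcal A\in\mathbb{C}_p^{I\times J}$ is an $I\times J$ array of tubal scalars; its $k$-th frontal slice $\mathcal A^{(k)}$ has entries $\mathcal A(i,j)^{(k)}$, and $L(\mathcal A)$ is obtained by applying $L$ to every entry. $(\mathcal A*\mathcal B)(i,k)=\sum_j\mathcal A(i,j)*\mathcal B(j,k)$; equivalently $L(\mathcal A*\mathcal B)^{(k)}=L(\mathcal A)^{(k)}L(\mathcal B)^{(k)}$. The identity $\mathcal I_I$ has $L(\mathcal I_I)^{(k)}$ equal to the $I\times I$ identity matrix for all $k$. The Hermitian transpose is defined by $L(\mathcal A^H)^{(k)}=(L(\mathcal A)^{(k)})^H$; $\mathcal A\in\mathbb{C}_p^{I\times I}$ is unitary if $\mathcal A*\mathcal A^H=\mathcal A^H*\mathcal A=\mathcal I_I$. A t-SVD of $\mathcal A\in\mathbb{C}_p^{I\times J}$ is the factorization $\mathcal A=\mathcal U*\Sigma*\mathcal V^H$ obtained by taking, for each $k$, a matrix SVD $L(\mathcal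 A)^{(k)}=U_kS_kV_k^H$ (with $U_k,V_k$ unitary, $S_k$ rectangular diagonal with singular values in nonincreasing order) and defining $L(\mathcal U)^{(k)}=U_k$, $L(\Sigma)^{(k)}=S_k$, $L(\mathcal V)^{(k)}=V_k$; $\mathcal U$ is its left unitary factor. The t-rank is the number of nonzero tubal scalars $\Sigma(i,i)$. A tubal tensor $\mathcal A\in\mathbb{C}_p^{I_1\times\cdots\times I_N}$ is an $N$-way array of tubal scalars; its mode-$n$ unfolding $\mathcal A_{(n)}\in\mathbb{C}_p^{I_n\times\prod_{m\neq n}I_m}$ has $\mathcal A_{(n)}(i_n,j)=\mathcal A(i_1,\dots,i_N)$ with $j=1+\sum_{k\neq n}(i_k-1)\prod_{m<k,\,m\neq n}I_m$. The $n$-mode product is $(\mathcal A*_n\mathcal U)(i_1,\dots,i_{n-1},j,i_{n+1},\dots,i_N)=\sum_{i_n}\mathcal A(i_1,\dots,i_N)*\mathcal U(j,i_n)$; repeated products are evaluated left to right. $\|\cdot\|$ is the Frobenius norm (Euclidean norm of all complex entries of the underlying array). *)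

theory Defs
  imports "HOL-Analysis.Analysis"
begin

text \<open>Tubal scalars are vectors of type complex^'p (p = CARD('p)); the transform L is a
 p x p complex matrix acting by matrix-vector multiplication. Tubal matrices of size I x J are
 functions nat => nat => tubal scalar (0-based indices, only i < I, j < J matter); tubal tensors
 are functions from index lists (0-based) to tubal scalars.\<close>

definition cadj :: "complex^'n^'m \<Rightarrow> complex^'m^'n" where
  "cadj M = (\<chi> i j. cnj (M $ j $ i))"

definition unitary_mat :: "complex^'n^'n \<Rightarrow> bool" where
  "unitary_mat W \<longleftrightarrow> W ** cadj W = mat 1 \<and> cadj W ** W = mat 1"

definition tprod :: "complex^'p^'p \<Rightarrow> complex^'p \<Rightarrow> complex^'p \<Rightarrow> complex^'p" where
  "tprod L a b = matrix_inv L *v ((L *v a) * (L *v b))"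

definition tconj :: "complex^'p^'p \<Rightarrow> complex^'p \<Rightarrow> complex^'p" where
  "tconj L a = matrix_inv L *v (\<chi> k. cnj ((L *v a) $ k))"

definition tone :: "complex^'p^'p \<Rightarrow> complex^'p" where
  "tone L = matrix_inv L *v 1"

type_synonym 'p tmat = "nat \<Rightarrow> nat \<Rightarrow> complex^('p::finite)"
type_synonym 'p ttensor = "nat list \<Rightarrow> complex^('p::finite)"

definition tmatmul :: "complex^'p^'p \<Rightarrow> nat \<Rightarrow> 'p tmat \<Rightarrow> 'p tmat \<Rightarrow> 'p tmat" where
  "tmatmul L K A B = (\<lambda>i k. \<Sum>j<K. tprod L (A i j) (B j k))"

definition tident :: "complex^'p^'p \<Rightarrow> 'p tmat" where
  "tident L = (\<lambda>i j. if i = j then tone L else 0)"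

definition tH :: "complex^'p^'p \<Rightarrow> 'p tmat \<Rightarrow> 'p tmat" where
  "tH L A = (\<lambda>i j. tconj L (A j i))"

definition slice :: "complex^'p^'p \<Rightarrow> 'p tmat \<Rightarrow> 'p \<Rightarrow> nat \<Rightarrow> nat \<Rightarrow> complex" where
  "slice L A k = (\<lambda>i j. (L *v A i j) $ k)"

definition unitary_on :: "nat \<Rightarrow> (nat \<Rightarrow> nat \<Rightarrow> complex) \<Rightarrow> bool" where
  "unitary_on n M \<longleftrightarrow>
     (\<forall>i<n. \<forall>j<n. (\<Sum>l<n. M i l * cnj (M j l)) = (if i = j then 1 else 0)) \<and>
     (\<forall>i<n. \<forall>j<n. (\<Sum>l<n. cnj (M l i) * M l j) = (if i = j then 1 else 0))"

definition is_svd :: "nat \<Rightarrow> nat \<Rightarrow> (nat \<Rightarrow> nat \<Rightarrow> complex) \<Rightarrow> (nat \<Rightarrow> nat \<Rightarrow> complex)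
    \<Rightarrow> (nat \<Rightarrow> nat \<Rightarrow> complex) \<Rightarrow> (nat \<Rightarrow> nat \<Rightarrow> complex) \<Rightarrow> bool" where
  "is_svd I J A U S V \<longleftrightarrow>
     unitary_on I U \<and> unitary_on J V \<and>
     (\<forall>i<I. \<forall>j<J. i \<noteq> j \<longrightarrow> S i j = 0) \<and>
     (\<forall>i<min I J. S i i \<in> \<real> \<and> 0 \<le> Re (S i i)) \<and>
     (\<forall>i. Suc i < min I J \<longrightarrow> Re (S (Suc i) (Suc i)) \<le> Re (S i i)) \<and>
     (\<forall>i<I. \<forall>j<J. A i j = (\<Sum>a<I. \<Sum>b<J. U i a * S a b * cnj (V j b)))"

definition tsvd :: "complex^'p^'p \<Rightarrow> nat \<Rightarrow> nat \<Rightarrow> 'p tmat \<Rightarrow> 'p tmat \<Rightarrow> 'p tmat \<Rightarrow> 'p tmat \<Rightarrow> bool" where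
  "tsvd L I J A U S V \<longleftrightarrow> (\<forall>k. is_svd I J (slice L A k) (slice L U k) (slice L S k) (slice L V k))"

definition trank :: "nat \<Rightarrow> nat \<Rightarrow> ('p::finite) tmat \<Rightarrow> nat" where
  "trank I J S = card {i. i < min I J \<and> S i i \<noteq> 0}"

definition tidx :: "nat list \<Rightarrow> nat list set" where
  "tidx dims = {is. length is = length dims \<and> (\<forall>m<length dims. is ! m < dims ! m)}"

definition tnorm :: "nat list \<Rightarrow> ('p::finite) ttensor \<Rightarrow> real" where
  "tnorm dims X = sqrt (\<Sum>is\<in>tidx dims. (norm (X is))\<^sup>2)"

text \<open>mode-n unfolding (0-based): column j encodes the other indices, lower modes fastest,
 j = sum_{k<>n} i_k * prod_{m<k, m<>n} I_m\<close>
definition unfold_idx :: "nat list \<Rightarrow> nat \<Rightarrow> nat \<Rightarrow> nat \<Rightarrow> nat list" where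
  "unfold_idx dims n i j =
     map (\<lambda>k. if k = n then i
              else (j div (\<Prod>m\<in>{m. m < k \<and> m \<noteq> n}. dims ! m)) mod (dims ! k))
         [0..<length dims]"

definition unfold_cols :: "nat list \<Rightarrow> nat \<Rightarrow> nat" where
  "unfold_cols dims n = (\<Prod>m\<in>{m. m < length dims \<and> m \<noteq> n}. dims ! m)"

definition unfold :: "nat list \<Rightarrow> nat \<Rightarrow> ('p::finite) ttensor \<Rightarrow> 'p tmat" where
  "unfold dims n A = (\<lambda>i j. A (unfold_idx dims n i j))"

text \<open>n-mode product (0-based mode n, Idim = size of mode n of A):
  (A *_n U)(.., j, ..) = sum_{r<Im} A(.., r, ..) * U(j, r)\<close>
definition nmode :: "complex^'p^'p \<Rightarrow> nat \<Rightarrow> nat \<Rightarrow> 'p ttensor \<Rightarrow> 'p tmat \<Rightarrow> 'p ttensor" where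
  "nmode L Idim n A U = (\<lambda>is. \<Sum>r<Idim. tprod L (A (is[n := r])) (U (is ! n) r))"

text \<open>A *_1 M_1 ... *_m M_m (modes 0..m-1, left to right); dims = original dimensions of A\<close>
fun mmodes :: "complex^'p^'p \<Rightarrow> nat list \<Rightarrow> 'p ttensor \<Rightarrow> (nat \<Rightarrow> 'p tmat) \<Rightarrow> nat \<Rightarrow> 'p ttensor" where
  "mmodes L dims A M 0 = A"
| "mmodes L dims A M (Suc m) = nmode L (dims ! m) m (mmodes L dims A M m) (M m)"

definition dims_after :: "nat list \<Rightarrow> nat list \<Rightarrow> nat \<Rightarrow> nat list" where
  "dims_after I I' n = map (\<lambda>k. if k < n then I' ! k else I ! k) [0..<length I]"

end

theory Submission
  imports Defs
begin

text \<open>Since \<open>L = c W\<close> with \<open>W\<close> unitary, \<open>L\<close> multiplies Frobenius norms by \<open>|c|\<close>, and every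
  operation in the statement acts frontal slice by frontal slice in the transform domain.  Both
  inequalities therefore reduce to statements about complex tensors, summed over the \<open>p\<close> slices.

  For a complex tensor the error of the sequentially truncated HOSVD telescopes into the
  projection residuals of the successive modes, which are mutually orthogonal.  The \<open>n\<close>-th
  residual is the tail of the singular values of the partially projected mode-\<open>n\<close> unfolding; since
  the earlier projections are contractions commuting with the projection in mode \<open>n\<close>, it is
  bounded by the tail of the mode-\<open>n\<close> singular values of \<open>A\<close> itself.  Each of these \<open>N\<close> tails is in
  turn at most the squared distance from \<open>A\<close> to any tensor of multilinear rank
  \<open>(I'\<^sub>1, \<dots>, I'\<^sub>N)\<close>, by Eckart--Young for the mode-\<open>n\<close> unfolding.\<close>

section \<open>Orthonormal columns\<close>

definition orthonormal_cols :: "'a set \<Rightarrow> 'b set \<Rightarrow> ('a \<Rightarrow> 'b \<Rightarrow> complex) \<Rightarrow> bool" where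
  "orthonormal_cols S T W \<longleftrightarrow>
     (\<forall>a\<in>T. \<forall>b\<in>T. (\<Sum>i\<in>S. cnj (W i a) * W i b) = (if a = b then 1 else 0))"

lemma of_real_sum_norm_sq: "complex_of_real (\<Sum>i\<in>S. (cmod (f i))\<^sup>2) = (\<Sum>i\<in>S. f i * cnj (f i))"
  by (simp only: of_real_sum complex_norm_square)

lemma sum_norm_sq_eqI:
  assumes "(\<Sum>i\<in>S. f i * cnj (f i)) = (\<Sum>i\<in>T. g i * cnj (g i))"
  shows "(\<Sum>i\<in>S. (cmod (f i))\<^sup>2) = (\<Sum>i\<in>T. (cmod (g i))\<^sup>2)"
  using assms unfolding of_real_sum_norm_sq[symmetric] of_real_eq_iff .

lemma orthonormal_colsD:
  "orthonormal_cols S T W \<Longrightarrow> a \<in> T \<Longrightarrow> b \<in> T \<Longrightarrow>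
     (\<Sum>i\<in>S. cnj (W i a) * W i b) = (if a = b then 1 else 0)"
  unfolding orthonormal_cols_def by blast

lemma orthonormal_cols_cnj:
  assumes "orthonormal_cols S T W"
  shows "orthonormal_cols S T (\<lambda>i j. cnj (W i j))"
  unfolding orthonormal_cols_def
proof (intro ballI)
  fix a b assume "a \<in> T" "b \<in> T"
  then have "cnj (\<Sum>i\<in>S. cnj (W i a) * W i b) = (if a = b then 1 else 0)"
    using orthonormal_colsD[OF assms] by simp
  then show "(\<Sum>i\<in>S. cnj (cnj (W i a)) * cnj (W i b)) = (if a = b then 1 else 0)"
    by (simp add: mult.commute)
qed

lemma unitary_on_orthonormal_cols:
  "unitary_on n U \<Longrightarrow> r \<le> n \<Longrightarrow> orthonormal_cols {..<n} {..<r} U"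
  unfolding unitary_on_def orthonormal_cols_def by auto

lemma unitary_on_orthonormal_rows:
  assumes "unitary_on n U"
  shows "orthonormal_cols {..<n} {..<n} (\<lambda>i j. U j i)"
  unfolding orthonormal_cols_def
proof (intro ballI)
  fix a b assume "a \<in> {..<n}" "b \<in> {..<n}"
  then have "(\<Sum>l<n. U b l * cnj (U a l)) = (if b = a then 1 else 0)"
    using assms unfolding unitary_on_def by auto
  then show "(\<Sum>l<n. cnj (U a l) * U b l) = (if a = b then 1 else 0)"
    by (auto simp: mult.commute)
qed

lemma orthonormal_cols_inner:
  assumes T: "finite T" and W: "orthonormal_cols S T W"
  shows "(\<Sum>i\<in>S. (\<Sum>l\<in>T. W i l * m l) * cnj (\<Sum>l\<in>T. W i l * m' l)) = (\<Sum>l\<in>T. m l * cnj (m' l))"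
proof -
  have "(\<Sum>i\<in>S. (\<Sum>l\<in>T. W i l * m l) * cnj (\<Sum>l\<in>T. W i l * m' l))
      = (\<Sum>l\<in>T. \<Sum>l'\<in>T. m l * cnj (m' l') * (\<Sum>i\<in>S. cnj (W i l') * W i l))"
    by (simp add: sum_product mult_ac, subst sum.swap) (simp add: sum_distrib_left sum.swap[of _ S])
  also have "\<dots> = (\<Sum>l\<in>T. \<Sum>l'\<in>T. m l * cnj (m' l') * (if l' = l then 1 else 0))"
    by (intro sum.cong refl) (simp add: orthonormal_colsD[OF W])
  also have "\<dots> = (\<Sum>l\<in>T. m l * cnj (m' l))"
    using T by (simp add: if_distrib cong: if_cong)
  finally show ?thesis .
qed

lemma orthonormal_cols_norm:
  assumes "finite T" and "orthonormal_cols S T W"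
  shows "(\<Sum>i\<in>S. (cmod (\<Sum>l\<in>T. W i l * m l))\<^sup>2) = (\<Sum>l\<in>T. (cmod (m l))\<^sup>2)"
  by (rule sum_norm_sq_eqI) (rule orthonormal_cols_inner[OF assms])

lemma orthonormal_cols_col_norm:
  assumes "orthonormal_cols S T W" and "a \<in> T"
  shows "(\<Sum>i\<in>S. (cmod (W i a))\<^sup>2) = 1"
proof -
  have "complex_of_real (\<Sum>i\<in>S. (cmod (W i a))\<^sup>2) = 1"
    unfolding of_real_sum_norm_sq using orthonormal_colsD[OF assms(1,2,2)] by (simp add: mult.commute)
  then show ?thesis by (metis of_real_eq_1_iff)
qed

lemma orthonormal_cols_residual:
  assumes T: "finite T" and W: "orthonormal_cols S T W"
  shows "(\<Sum>i\<in>S. (cmod (x i - (\<Sum>l\<in>T. W i l * m l)))\<^sup>2)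
     = (\<Sum>i\<in>S. (cmod (x i))\<^sup>2) - (\<Sum>l\<in>T. (cmod (\<Sum>s\<in>S. cnj (W s l) * x s))\<^sup>2)
       + (\<Sum>l\<in>T. (cmod (m l - (\<Sum>s\<in>S. cnj (W s l) * x s)))\<^sup>2)"
proof -
  define y where "y i = (\<Sum>l\<in>T. W i l * m l)" for i
  define g where "g l = (\<Sum>s\<in>S. cnj (W s l) * x s)" for l
  have yy: "(\<Sum>i\<in>S. y i * cnj (y i)) = (\<Sum>l\<in>T. m l * cnj (m l))"
    unfolding y_def by (rule orthonormal_cols_inner[OF T W])
  have xy: "(\<Sum>i\<in>S. x i * cnj (y i)) = (\<Sum>l\<in>T. cnj (m l) * g l)"
    unfolding y_def g_def by (simp add: sum_distrib_left sum_distrib_right mult_ac sum.swap[of _ S])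
  have yx: "(\<Sum>i\<in>S. y i * cnj (x i)) = (\<Sum>l\<in>T. m l * cnj (g l))"
  proof -
    have "(\<Sum>i\<in>S. y i * cnj (x i)) = cnj (\<Sum>i\<in>S. x i * cnj (y i))"
      by (simp add: mult.commute)
    also have "\<dots> = (\<Sum>l\<in>T. m l * cnj (g l))"
      unfolding xy by (simp add: mult.commute)
    finally show ?thesis .
  qed
  have "complex_of_real (\<Sum>i\<in>S. (cmod (x i - y i))\<^sup>2)
      = (\<Sum>i\<in>S. (x i - y i) * cnj (x i - y i))"
    by (rule of_real_sum_norm_sq)
  also have "\<dots> = (\<Sum>i\<in>S. x i * cnj (x i)) - (\<Sum>i\<in>S. x i * cnj (y i)) - (\<Sum>i\<in>S. y i * cnj (x i))
        + (\<Sum>i\<in>S. y i * cnj (y i))"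
    by (simp add: algebra_simps sum.distrib sum_subtractf)
  also have "\<dots> = (\<Sum>i\<in>S. x i * cnj (x i)) - (\<Sum>l\<in>T. g l * cnj (g l))
        + (\<Sum>l\<in>T. (m l - g l) * cnj (m l - g l))"
    unfolding yy xy yx by (simp add: algebra_simps sum.distrib sum_subtractf)
  also have "\<dots> = complex_of_real ((\<Sum>i\<in>S. (cmod (x i))\<^sup>2) - (\<Sum>l\<in>T. (cmod (g l))\<^sup>2)
        + (\<Sum>l\<in>T. (cmod (m l - g l))\<^sup>2))"
    by (simp only: of_real_add of_real_diff of_real_sum_norm_sq)
  finally show ?thesis unfolding y_def g_def using of_real_eq_iff by blast
qed

lemma orthonormal_cols_bessel:
  assumes "finite T" and "orthonormal_cols S T W"
  shows "(\<Sum>l\<in>T. (cmod (\<Sum>s\<in>S. cnj (W s l) * x s))\<^sup>2) \<le> (\<Sum>i\<in>S. (cmod (x i))\<^sup>2)"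
  using orthonormal_cols_residual[OF assms, of x "\<lambda>l. \<Sum>s\<in>S. cnj (W s l) * x s"]
  by (simp add: sum_nonneg) (smt (verit) sum_nonneg zero_le_power2)

section \<open>Singular value decompositions\<close>

definition mat_frob_sq :: "nat \<Rightarrow> nat \<Rightarrow> (nat \<Rightarrow> nat \<Rightarrow> complex) \<Rightarrow> real" where
  "mat_frob_sq I J A = (\<Sum>i<I. \<Sum>j<J. (cmod (A i j))\<^sup>2)"

definition sv_tail :: "(nat \<Rightarrow> nat \<Rightarrow> 'a::real_normed_vector) \<Rightarrow> nat \<Rightarrow> nat \<Rightarrow> real" where
  "sv_tail S r K = (\<Sum>i\<in>{r..<K}. (norm (S i i))\<^sup>2)"

lemma is_svd_entry:
  assumes "is_svd I J A U S V" "i < I" "j < J"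
  shows "A i j = (\<Sum>a<min I J. U i a * S a a * cnj (V j a))"
proof -
  from assms have diag: "\<And>a b. a < I \<Longrightarrow> b < J \<Longrightarrow> a \<noteq> b \<Longrightarrow> S a b = 0"
    and eq: "A i j = (\<Sum>a<I. \<Sum>b<J. U i a * S a b * cnj (V j b))"
    unfolding is_svd_def by auto
  have "A i j = (\<Sum>a<I. if a < J then U i a * S a a * cnj (V j a) else 0)"
    unfolding eq
  proof (intro sum.cong refl)
    fix a assume a: "a \<in> {..<I}"
    have "(\<Sum>b<J. U i a * S a b * cnj (V j b))
        = (\<Sum>b<J. if b = a then U i a * S a a * cnj (V j a) else 0)"
      by (intro sum.cong refl) (use a diag in auto)
    then show "(\<Sum>b<J. U i a * S a b * cnj (V j b)) = (if a < J then U i a * S a a * cnj (V j a) else 0)"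
      by simp
  qed
  also have "\<dots> = (\<Sum>a\<in>{..<I} \<inter> {a. a < J}. U i a * S a a * cnj (V j a))"
    by (simp add: sum.inter_restrict)
  also have "{..<I} \<inter> {a. a < J} = {..<min I J}" by auto
  finally show ?thesis .
qed

lemma is_svd_norm_sq_row_comb:
  assumes svd: "is_svd I J A U S V"
  shows "(\<Sum>j<J. (cmod (\<Sum>i<I. cnj (w i) * A i j))\<^sup>2)
       = (\<Sum>a<min I J. (cmod (S a a))\<^sup>2 * (cmod (\<Sum>i<I. cnj (w i) * U i a))\<^sup>2)"
proof -
  have V: "orthonormal_cols {..<J} {..<min I J} (\<lambda>j a. cnj (V j a))"
    using svd unfolding is_svd_def by (intro orthonormal_cols_cnj unitary_on_orthonormal_cols) auto
  have "(\<Sum>i<I. cnj (w i) * A i j) = (\<Sum>a<min I J. cnj (V j a) * (S a a * (\<Sum>i<I. cnj (w i) * U i a)))"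
    if j: "j < J" for j
  proof -
    have "(\<Sum>i<I. cnj (w i) * A i j) = (\<Sum>i<I. cnj (w i) * (\<Sum>a<min I J. U i a * S a a * cnj (V j a)))"
      by (intro sum.cong refl) (simp add: is_svd_entry[OF svd _ j])
    also have "\<dots> = (\<Sum>a<min I J. cnj (V j a) * (S a a * (\<Sum>i<I. cnj (w i) * U i a)))"
      by (simp add: sum_distrib_left sum_distrib_right mult_ac sum.swap[of _ "{..<I}"])
    finally show ?thesis .
  qed
  then have "(\<Sum>j<J. (cmod (\<Sum>i<I. cnj (w i) * A i j))\<^sup>2)
       = (\<Sum>j<J. (cmod (\<Sum>a<min I J. cnj (V j a) * (S a a * (\<Sum>i<I. cnj (w i) * U i a))))\<^sup>2)"
    by simp
  also have "\<dots> = (\<Sum>a<min I J. (cmod (S a a * (\<Sum>i<I. cnj (w i) * U i a)))\<^sup>2)"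
    by (rule orthonormal_cols_norm[OF _ V]) simp
  also have "\<dots> = (\<Sum>a<min I J. (cmod (S a a))\<^sup>2 * (cmod (\<Sum>i<I. cnj (w i) * U i a))\<^sup>2)"
    by (simp add: norm_mult power_mult_distrib)
  finally show ?thesis .
qed

lemma is_svd_mat_frob_sq:
  assumes svd: "is_svd I J A U S V"
  shows "mat_frob_sq I J A = (\<Sum>a<min I J. (cmod (S a a))\<^sup>2)"
proof -
  have U: "orthonormal_cols {..<I} {..<min I J} U"
    using svd unfolding is_svd_def by (auto intro: unitary_on_orthonormal_cols)
  have row: "(\<Sum>s<I. cnj (if s = i then 1 else 0) * f s) = (f i :: complex)" if "i < I" for i f
  proof -
    have "(\<Sum>s<I. cnj (if s = i then 1 else 0) * f s) = (\<Sum>s<I. if s = i then f s else 0)"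
      by (intro sum.cong refl) simp
    then show ?thesis using that by simp
  qed
  have "mat_frob_sq I J A = (\<Sum>i<I. \<Sum>j<J. (cmod (\<Sum>s<I. cnj (if s = i then 1 else 0) * A s j))\<^sup>2)"
    unfolding mat_frob_sq_def by (intro sum.cong refl) (simp add: row)
  also have "\<dots> = (\<Sum>i<I. \<Sum>a<min I J. (cmod (S a a))\<^sup>2 * (cmod (\<Sum>s<I. cnj (if s = i then 1 else 0) * U s a))\<^sup>2)"
    by (intro sum.cong refl is_svd_norm_sq_row_comb[OF svd])
  also have "\<dots> = (\<Sum>a<min I J. (cmod (S a a))\<^sup>2 * (\<Sum>i<I. (cmod (U i a))\<^sup>2))"
    by (subst sum.swap) (simp add: sum_distrib_left row)
  also have "\<dots> = (\<Sum>a<min I J. (cmod (S a a))\<^sup>2)"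
    by (simp add: orthonormal_cols_col_norm[OF U])
  finally show ?thesis .
qed

lemma is_svd_sv_antimono:
  assumes svd: "is_svd I J A U S V" and ab: "a \<le> b" and b: "b < min I J"
  shows "cmod (S b b) \<le> cmod (S a a)"
proof -
  have re: "cmod (S i i) = Re (S i i)" if "i < min I J" for i
  proof -
    have "S i i \<in> \<real>" "0 \<le> Re (S i i)" using svd that unfolding is_svd_def by auto
    then show ?thesis by (metis Reals_cases Re_complex_of_real norm_of_real abs_of_nonneg)
  qed
  have "b < min I J \<longrightarrow> Re (S b b) \<le> Re (S a a)"
    using ab
  proof (induction rule: dec_induct)
    case (step n)
    then show ?case using svd unfolding is_svd_def by (auto intro: order.trans)
  qed simp
  with ab b re show ?thesis by simp
qed

text \<open>The extremal distribution of the mass \<open>c\<close> puts mass \<open>1\<close> on the \<open>r\<close> largest weights.\<close>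
lemma sum_weighted_le_sum_head:
  fixes d c :: "nat \<Rightarrow> real" and K r :: nat
  assumes d0: "\<And>a. a < K \<Longrightarrow> 0 \<le> d a"
    and dmono: "\<And>a b. a \<le> b \<Longrightarrow> b < K \<Longrightarrow> d b \<le> d a"
    and c01: "\<And>a. a < K \<Longrightarrow> 0 \<le> c a \<and> c a \<le> 1"
    and csum: "(\<Sum>a<K. c a) \<le> real r"
  shows "(\<Sum>a<K. d a * c a) \<le> (\<Sum>a<min r K. d a)"
proof (cases "K \<le> r")
  case True
  have "(\<Sum>a<K. d a * c a) \<le> (\<Sum>a<K. d a)"
    by (intro sum_mono) (use d0 c01 in \<open>auto intro: mult_left_le\<close>)
  then show ?thesis using True by (simp add: min_absorb2)
next
  case False
  then have rK: "r < K" by simp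
  define t where "t = d r"
  have t0: "0 \<le> t" unfolding t_def using d0 rK by simp
  have split: "(\<Sum>a<K. f a) = (\<Sum>a<r. f a) + (\<Sum>a\<in>{r..<K}. f a)" for f :: "nat \<Rightarrow> real"
    using rK by (metis atLeast0LessThan le_less sum.atLeastLessThan_concat zero_le)
  have "(\<Sum>a<K. d a * c a) \<le> (\<Sum>a<r. d a - t + t * c a) + (\<Sum>a\<in>{r..<K}. t * c a)"
    unfolding split[of "\<lambda>a. d a * c a"]
  proof (intro add_mono sum_mono)
    fix a assume a: "a \<in> {..<r}"
    have "0 \<le> (d a - t) * (1 - c a)"
      using dmono[of a r] c01[of a] a rK unfolding t_def by simp
    then show "d a * c a \<le> d a - t + t * c a" by (simp add: algebra_simps)
  next
    fix a assume a: "a \<in> {r..<K}"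
    then show "d a * c a \<le> t * c a"
      using dmono[of r a] c01[of a] unfolding t_def by (simp add: mult_right_mono)
  qed
  also have "\<dots> = (\<Sum>a<r. d a) - t * real r + t * (\<Sum>a<K. c a)"
    by (simp add: split[of c] sum.distrib sum_subtractf sum_distrib_left algebra_simps)
  also have "\<dots> \<le> (\<Sum>a<r. d a)"
    using mult_left_mono[OF csum t0] by simp
  finally show ?thesis using rK by (simp add: min_absorb1)
qed

lemma is_svd_residual_lower:
  fixes r :: nat
  assumes svd: "is_svd I J A U S V" and W: "orthonormal_cols {..<I} {..<r} W"
  shows "mat_frob_sq I J (\<lambda>i j. A i j - (\<Sum>l<r. W i l * M l j))
     \<ge> (\<Sum>a<min I J. (cmod (S a a))\<^sup>2 * (1 - (\<Sum>l<r. (cmod (\<Sum>s<I. cnj (W s l) * U s a))\<^sup>2)))"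
proof -
  have "(\<Sum>j<J. (\<Sum>i<I. (cmod (A i j))\<^sup>2) - (\<Sum>l<r. (cmod (\<Sum>s<I. cnj (W s l) * A s j))\<^sup>2))
      \<le> (\<Sum>j<J. \<Sum>i<I. (cmod (A i j - (\<Sum>l<r. W i l * M l j)))\<^sup>2)"
  proof (intro sum_mono)
    fix j
    show "(\<Sum>i<I. (cmod (A i j))\<^sup>2) - (\<Sum>l<r. (cmod (\<Sum>s<I. cnj (W s l) * A s j))\<^sup>2)
        \<le> (\<Sum>i<I. (cmod (A i j - (\<Sum>l<r. W i l * M l j)))\<^sup>2)"
    proof -
      have "(\<Sum>i<I. (cmod (A i j - (\<Sum>l<r. W i l * M l j)))\<^sup>2)
        = (\<Sum>i<I. (cmod (A i j))\<^sup>2) - (\<Sum>l<r. (cmod (\<Sum>s<I. cnj (W s l) * A s j))\<^sup>2)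
          + (\<Sum>l<r. (cmod (M l j - (\<Sum>s<I. cnj (W s l) * A s j)))\<^sup>2)"
        by (rule orthonormal_cols_residual[OF _ W]) simp
      moreover have "0 \<le> (\<Sum>l<r. (cmod (M l j - (\<Sum>s<I. cnj (W s l) * A s j)))\<^sup>2)"
        by (simp add: sum_nonneg)
      ultimately show ?thesis by linarith
    qed
  qed
  moreover have "(\<Sum>j<J. (\<Sum>i<I. (cmod (A i j))\<^sup>2) - (\<Sum>l<r. (cmod (\<Sum>s<I. cnj (W s l) * A s j))\<^sup>2))
     = (\<Sum>a<min I J. (cmod (S a a))\<^sup>2 * (1 - (\<Sum>l<r. (cmod (\<Sum>s<I. cnj (W s l) * U s a))\<^sup>2)))"
    using is_svd_mat_frob_sq[OF svd] is_svd_norm_sq_row_comb[OF svd]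
    by (simp add: sum_subtractf mat_frob_sq_def sum.swap[of _ "{..<J}"] sum.swap[of _ "{..<r}"]
        sum_distrib_left algebra_simps)
  ultimately show ?thesis
    unfolding mat_frob_sq_def by (simp add: sum.swap[of _ "{..<J}"])
qed

lemma sum_lessThan_split_min:
  fixes K r :: nat
  shows "(\<Sum>a<K. f a) = (\<Sum>a<min r K. f a) + (\<Sum>a\<in>{r..<K}. f a)"
proof -
  have "(\<Sum>a<K. f a) = sum f ({..<min r K} \<union> {r..<K})" by (rule sum.cong) auto
  also have "\<dots> = (\<Sum>a<min r K. f a) + (\<Sum>a\<in>{r..<K}. f a)" by (rule sum.union_disjoint) auto
  finally show ?thesis .
qed

text \<open>The weights \<open>c a = \<parallel>W\<^sup>H u\<^sub>a\<parallel>\<^sup>2\<close> lie in \<open>[0,1]\<close> and sum to at most \<open>r\<close>.\<close>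
lemma eckart_young_tail_le:
  fixes r :: nat
  assumes svd: "is_svd I J A U S V" and W: "orthonormal_cols {..<I} {..<r} W"
  shows "sv_tail S r (min I J) \<le> mat_frob_sq I J (\<lambda>i j. A i j - (\<Sum>l<r. W i l * M l j))"
proof -
  have uU: "unitary_on I U" using svd unfolding is_svd_def by auto
  define c where "c a = (\<Sum>l<r. (cmod (\<Sum>s<I. cnj (W s l) * U s a))\<^sup>2)" for a
  define d where "d a = (cmod (S a a))\<^sup>2" for a
  define K where "K = min I J"
  have c01: "0 \<le> c a \<and> c a \<le> 1" if "a < K" for a
  proof
    show "0 \<le> c a" unfolding c_def by (simp add: sum_nonneg)
    have "c a \<le> (\<Sum>i<I. (cmod (U i a))\<^sup>2)"
      unfolding c_def by (rule orthonormal_cols_bessel[OF _ W]) simp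
    also have "\<dots> = 1"
      using that unfolding K_def
      by (intro orthonormal_cols_col_norm[OF unitary_on_orthonormal_cols[OF uU order.refl]]) simp
    finally show "c a \<le> 1" .
  qed
  have csum: "(\<Sum>a<K. c a) \<le> real r"
  proof -
    have "(\<Sum>a<K. c a) \<le> (\<Sum>a<I. c a)"
      by (rule sum_mono2) (auto simp: K_def c_def sum_nonneg)
    also have "\<dots> = (\<Sum>l<r. \<Sum>a<I. (cmod (\<Sum>s<I. U s a * cnj (W s l)))\<^sup>2)"
      unfolding c_def by (subst sum.swap) (simp add: mult.commute)
    also have "\<dots> = (\<Sum>l<r. \<Sum>s<I. (cmod (cnj (W s l)))\<^sup>2)"
      by (intro sum.cong refl orthonormal_cols_norm[OF _ unitary_on_orthonormal_rows[OF uU]]) simp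
    also have "\<dots> = (\<Sum>l<r. 1)"
      by (intro sum.cong refl) (simp add: orthonormal_cols_col_norm[OF W])
    finally show ?thesis by simp
  qed
  have "(\<Sum>a<K. d a * c a) \<le> (\<Sum>a<min r K. d a)"
  proof (rule sum_weighted_le_sum_head[OF _ _ c01 csum])
    show "d b \<le> d a" if "a \<le> b" "b < K" for a b
      using is_svd_sv_antimono[OF svd that[unfolded K_def]] unfolding d_def by (simp add: power_mono)
  qed (simp add: d_def)
  then have "sv_tail S r K \<le> (\<Sum>a<K. d a * (1 - c a))"
    using sum_lessThan_split_min[of d K r]
    unfolding sv_tail_def d_def by (simp add: algebra_simps sum_subtractf)
  also have "\<dots> \<le> mat_frob_sq I J (\<lambda>i j. A i j - (\<Sum>l<r. W i l * M l j))"
    using is_svd_residual_lower[OF svd W, of M] unfolding c_def d_def K_def by simp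
  finally show ?thesis unfolding K_def .
qed

lemma is_svd_truncation_error:
  fixes r :: nat
  assumes svd: "is_svd I J A U S V" and rI: "r \<le> I"
  shows "mat_frob_sq I J (\<lambda>i j. A i j - (\<Sum>l<r. U i l * (\<Sum>s<I. cnj (U s l) * A s j)))
       = sv_tail S r (min I J)"
proof -
  have uU: "unitary_on I U" using svd unfolding is_svd_def by auto
  have U: "orthonormal_cols {..<I} {..<r} U"
    by (rule unitary_on_orthonormal_cols[OF uU rI])
  have proj: "(\<Sum>l<r. (cmod (\<Sum>s<I. cnj (U s l) * U s a))\<^sup>2) = (if a < r then 1 else 0)"
    if a: "a < I" for a
  proof -
    have "(\<Sum>l<r. (cmod (\<Sum>s<I. cnj (U s l) * U s a))\<^sup>2) = (\<Sum>l<r. (if l = a then 1 else 0))"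
      using uU a rI unfolding unitary_on_def by (intro sum.cong refl) auto
    also have "\<dots> = (if a < r then 1 else 0)" by (subst sum.delta) auto
    finally show ?thesis .
  qed
  have "mat_frob_sq I J (\<lambda>i j. A i j - (\<Sum>l<r. U i l * (\<Sum>s<I. cnj (U s l) * A s j)))
     = (\<Sum>j<J. (\<Sum>i<I. (cmod (A i j))\<^sup>2) - (\<Sum>l<r. (cmod (\<Sum>s<I. cnj (U s l) * A s j))\<^sup>2))"
    unfolding mat_frob_sq_def
    by (subst sum.swap, intro sum.cong refl) (simp add: orthonormal_cols_residual[OF _ U])
  also have "\<dots> = (\<Sum>a<min I J. (cmod (S a a))\<^sup>2)
      - (\<Sum>a<min I J. (cmod (S a a))\<^sup>2 * (\<Sum>l<r. (cmod (\<Sum>s<I. cnj (U s l) * U s a))\<^sup>2))"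
    using is_svd_mat_frob_sq[OF svd] is_svd_norm_sq_row_comb[OF svd]
    by (simp add: sum_subtractf mat_frob_sq_def sum.swap[of _ "{..<J}"] sum.swap[of _ "{..<r}"]
        sum_distrib_left)
  also have "(\<Sum>a<min I J. (cmod (S a a))\<^sup>2 * (\<Sum>l<r. (cmod (\<Sum>s<I. cnj (U s l) * U s a))\<^sup>2))
      = (\<Sum>a<min r (min I J). (cmod (S a a))\<^sup>2)"
  proof -
    have "(\<Sum>a<min I J. (cmod (S a a))\<^sup>2 * (\<Sum>l<r. (cmod (\<Sum>s<I. cnj (U s l) * U s a))\<^sup>2))
        = (\<Sum>a\<in>{..<min I J} \<inter> {a. a < r}. (cmod (S a a))\<^sup>2)"
      by (simp add: proj sum.inter_restrict if_distrib cong: if_cong)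
    also have "{..<min I J} \<inter> {a. a < r} = {..<min r (min I J)}" by auto
    finally show ?thesis .
  qed
  finally show ?thesis
    using sum_lessThan_split_min[of "\<lambda>a. (cmod (S a a))\<^sup>2" "min I J" r] unfolding sv_tail_def by simp
qed

lemma is_svd_diag_zero_mono:
  assumes "is_svd I J A U S V" "S i i = 0" "i \<le> m" "m < min I J"
  shows "S m m = 0"
  using is_svd_sv_antimono[OF assms(1,3,4)] assms(2) by simp

section \<open>Tensor indices and unfoldings\<close>

lemma tidx_length: "is \<in> tidx D \<Longrightarrow> length is = length D"
  unfolding tidx_def by auto

text \<open>The factor \<open>D[n := 1]\<close> pins the \<open>n\<close>-th entry of the outer index to \<open>0\<close>.\<close>
lemma sum_tidx_split_mode:
  assumes n: "n < length D"
  shows "(\<Sum>is\<in>tidx D. f is) = (\<Sum>u\<in>tidx (D[n:=1]). \<Sum>i<D!n. f (u[n:=i]))"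
proof -
  have bij: "bij_betw (\<lambda>(u,i). u[n:=i]) (tidx (D[n:=1]) \<times> {..<D!n}) (tidx D)"
  proof (rule bij_betwI')
    fix x y assume x: "x \<in> tidx (D[n:=1]) \<times> {..<D!n}" and y: "y \<in> tidx (D[n:=1]) \<times> {..<D!n}"
    obtain u i v i' where xy: "x = (u,i)" "y = (v,i')" by (cases x, cases y)
    have "length u = length D" "u ! n = 0" "length v = length D" "v ! n = 0"
      using x y xy n unfolding tidx_def by auto
    then show "((\<lambda>(u,i). u[n:=i]) x = (\<lambda>(u,i). u[n:=i]) y) = (x = y)"
      using xy n by (metis (no_types, lifting) case_prod_conv list_update_id list_update_overwrite
          nth_list_update_eq)
  next
    fix x assume x: "x \<in> tidx (D[n:=1]) \<times> {..<D!n}"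
    obtain u i where "x = (u,i)" by (cases x)
    with x n show "(\<lambda>(u,i). u[n:=i]) x \<in> tidx D"
      unfolding tidx_def by (auto simp: nth_list_update)
  next
    fix y assume y: "y \<in> tidx D"
    show "\<exists>x\<in>tidx (D[n:=1]) \<times> {..<D!n}. y = (\<lambda>(u,i). u[n:=i]) x"
    proof
      show "y = (\<lambda>(u,i). u[n:=i]) (y[n:=0], y!n)" by simp
      show "(y[n:=0], y!n) \<in> tidx (D[n:=1]) \<times> {..<D!n}"
        using y n unfolding tidx_def by (auto simp: nth_list_update)
    qed
  qed
  have "(\<Sum>is\<in>tidx D. f is) = (\<Sum>x\<in>tidx (D[n:=1]) \<times> {..<D!n}. f ((\<lambda>(u,i). u[n:=i]) x))"
    by (rule sum.reindex_bij_betw[OF bij, symmetric])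
  also have "\<dots> = (\<Sum>u\<in>tidx (D[n:=1]). \<Sum>i<D!n. f (u[n:=i]))"
    by (subst sum.cartesian_product) (rule sum.cong, auto)
  finally show ?thesis .
qed

lemma sum_lessThan_mult_divmod:
  fixes d q :: nat
  shows "(\<Sum>j<d*q. F (j mod d) (j div d)) = (\<Sum>i<d. \<Sum>j<q. F i j)"
proof (induction q)
  case (Suc q)
  have "{..<d * Suc q} = {..<d*q} \<union> {d*q..<d*q+d}" by auto
  then have "(\<Sum>j<d * Suc q. F (j mod d) (j div d))
      = (\<Sum>j<d*q. F (j mod d) (j div d)) + (\<Sum>j\<in>{d*q..<d*q+d}. F (j mod d) (j div d))"
    by (simp add: sum.union_disjoint ivl_disj_int)
  also have "(\<Sum>j\<in>{d*q..<d*q+d}. F (j mod d) (j div d))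
      = (\<Sum>i\<in>{0..<d}. F ((i + d*q) mod d) ((i + d*q) div d))"
    using sum.shift_bounds_nat_ivl[of "\<lambda>j. F (j mod d) (j div d)" 0 "d*q" d] by (simp add: add.commute)
  also have "\<dots> = (\<Sum>i<d. F i q)"
    by (rule sum.cong) auto
  finally show ?case using Suc by (simp add: sum.distrib)
qed simp

definition mode_stride :: "nat list \<Rightarrow> nat \<Rightarrow> nat \<Rightarrow> nat" where
  "mode_stride D n k = (\<Prod>m\<in>{m. m < k \<and> m \<noteq> n}. D ! m)"

text \<open>For \<open>n \<ge> length D\<close> this is all of \<open>tidx D\<close>, which the induction over \<open>D\<close> below needs.\<close>
definition tidx_zero_at :: "nat list \<Rightarrow> nat \<Rightarrow> nat list set" where
  "tidx_zero_at D n =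
     {is. length is = length D \<and> (\<forall>m<length D. if m = n then is!m = 0 else is!m < D!m)}"

lemma unfold_cols_mode_stride: "unfold_cols D n = mode_stride D n (length D)"
  unfolding unfold_cols_def mode_stride_def ..

lemma unfold_idx_mode_stride:
  "unfold_idx D n i j = map (\<lambda>k. if k = n then i else (j div mode_stride D n k) mod D!k) [0..<length D]"
  unfolding unfold_idx_def mode_stride_def ..

lemma mode_stride_Cons_0: "k \<le> length D \<Longrightarrow> mode_stride (d#D) 0 (Suc k) = mode_stride D (length D) k"
proof -
  assume k: "k \<le> length D"
  have "{m. m < Suc k \<and> m \<noteq> 0} = {Suc 0..<Suc k}" by auto
  moreover have "{m. m < k \<and> m \<noteq> length D} = {0..<k}" using k by auto
  ultimately show ?thesis by (simp only: mode_stride_def prod.shift_bounds_Suc_ivl) simp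
qed

lemma mode_stride_Cons_Suc: "mode_stride (d#D) (Suc n) (Suc k) = d * mode_stride D n k"
proof -
  have "{m. m < Suc k \<and> m \<noteq> Suc n} = insert 0 (Suc ` {m. m < k \<and> m \<noteq> n})"
  proof (rule set_eqI)
    fix x show "x \<in> {m. m < Suc k \<and> m \<noteq> Suc n} \<longleftrightarrow> x \<in> insert 0 (Suc ` {m. m < k \<and> m \<noteq> n})"
      by (cases x) (auto simp: image_iff)
  qed
  then show ?thesis unfolding mode_stride_def by (simp add: prod.reindex)
qed

lemma mode_stride_0 [simp]: "mode_stride D n 0 = 1"
  unfolding mode_stride_def by simp

lemma unfold_idx_Cons_0: "unfold_idx (d#D) 0 0 j = 0 # unfold_idx D (length D) 0 j"
  unfolding unfold_idx_mode_stride
  by (simp add: upt_conv_Cons map_Suc_upt[symmetric] mode_stride_Cons_0 del: upt_Suc)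

lemma unfold_idx_Cons_Suc: "unfold_idx (d#D) (Suc n) 0 j = (j mod d) # unfold_idx D n 0 (j div d)"
  unfolding unfold_idx_mode_stride
  by (simp add: upt_conv_Cons map_Suc_upt[symmetric] mode_stride_Cons_Suc div_mult2_eq del: upt_Suc)

lemma tidx_zero_at_Cons_0: "tidx_zero_at (d#D) 0 = (\<lambda>u. 0 # u) ` tidx_zero_at D (length D)"
proof (rule set_eqI, rule iffI)
  fix x assume x: "x \<in> tidx_zero_at (d#D) 0"
  then obtain a u where xa: "x = a # u" unfolding tidx_zero_at_def by (cases x) auto
  have "a = 0" using x xa unfolding tidx_zero_at_def by (auto dest: spec[of _ 0])
  moreover have "u \<in> tidx_zero_at D (length D)"
    using x xa unfolding tidx_zero_at_def by (auto dest: spec[of _ "Suc _"])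
  ultimately show "x \<in> (\<lambda>u. 0 # u) ` tidx_zero_at D (length D)" using xa by blast
qed (auto simp: tidx_zero_at_def nth_Cons split: nat.split)

lemma tidx_zero_at_Cons_Suc:
  "tidx_zero_at (d#D) (Suc n) = (\<lambda>(i,u). i # u) ` ({..<d} \<times> tidx_zero_at D n)"
proof (rule set_eqI, rule iffI)
  fix x assume x: "x \<in> tidx_zero_at (d#D) (Suc n)"
  then obtain i u where xi: "x = i # u" unfolding tidx_zero_at_def by (cases x) auto
  have "i < d" using x xi unfolding tidx_zero_at_def by (auto dest: spec[of _ 0])
  moreover have "u \<in> tidx_zero_at D n"
    using x xi unfolding tidx_zero_at_def by (auto dest: spec[of _ "Suc _"])
  ultimately show "x \<in> (\<lambda>(i,u). i # u) ` ({..<d} \<times> tidx_zero_at D n)" using xi by force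
qed (auto simp: tidx_zero_at_def nth_Cons split: nat.split)

lemma sum_unfold_idx_tidx_zero_at:
  "(\<Sum>j<mode_stride D n (length D). h (unfold_idx D n 0 j)) = (\<Sum>u\<in>tidx_zero_at D n. h u)"
proof (induction D arbitrary: n h)
  case Nil
  have "tidx_zero_at [] n = {[]}" unfolding tidx_zero_at_def by auto
  then show ?case by (simp add: unfold_idx_def)
next
  case (Cons d D)
  show ?case
  proof (cases n)
    case 0
    have "(\<Sum>j<mode_stride (d#D) n (length (d#D)). h (unfold_idx (d#D) n 0 j))
        = (\<Sum>j<mode_stride D (length D) (length D). h (0 # unfold_idx D (length D) 0 j))"
      using 0 by (simp add: unfold_idx_Cons_0 mode_stride_Cons_0)
    also have "\<dots> = (\<Sum>u\<in>tidx_zero_at D (length D). h (0 # u))" by (rule Cons.IH)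
    also have "\<dots> = (\<Sum>u\<in>tidx_zero_at (d#D) n. h u)"
      unfolding 0 tidx_zero_at_Cons_0 by (subst sum.reindex) (auto simp: inj_on_def)
    finally show ?thesis .
  next
    case (Suc n')
    have "(\<Sum>j<mode_stride (d#D) n (length (d#D)). h (unfold_idx (d#D) n 0 j))
        = (\<Sum>j<d * mode_stride D n' (length D). h ((j mod d) # unfold_idx D n' 0 (j div d)))"
      using Suc by (simp add: unfold_idx_Cons_Suc mode_stride_Cons_Suc)
    also have "\<dots> = (\<Sum>i<d. \<Sum>j<mode_stride D n' (length D). h (i # unfold_idx D n' 0 j))"
      by (rule sum_lessThan_mult_divmod[where F = "\<lambda>i j. h (i # unfold_idx D n' 0 j)"])
    also have "\<dots> = (\<Sum>i<d. \<Sum>u\<in>tidx_zero_at D n'. h (i # u))"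
      by (intro sum.cong refl Cons.IH)
    also have "\<dots> = (\<Sum>x\<in>{..<d} \<times> tidx_zero_at D n'. h ((\<lambda>(i,u). i # u) x))"
      by (subst sum.cartesian_product) (rule sum.cong, auto)
    also have "\<dots> = (\<Sum>u\<in>tidx_zero_at (d#D) n. h u)"
      unfolding Suc tidx_zero_at_Cons_Suc by (subst sum.reindex) (auto simp: inj_on_def)
    finally show ?thesis .
  qed
qed

lemma length_unfold_idx [simp]: "length (unfold_idx D n i j) = length D"
  unfolding unfold_idx_def by simp

lemma unfold_idx_nth [simp]: "n < length D \<Longrightarrow> unfold_idx D n i j ! n = i"
  unfolding unfold_idx_def by simp

lemma unfold_idx_update [simp]: "n < length D \<Longrightarrow> (unfold_idx D n i j)[n := r] = unfold_idx D n r j"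
  unfolding unfold_idx_def by (rule nth_equalityI) (auto simp: nth_list_update)

lemma sum_tidx_unfold:
  assumes n: "n < length D"
  shows "(\<Sum>is\<in>tidx D. f is) = (\<Sum>i<D!n. \<Sum>j<unfold_cols D n. f (unfold_idx D n i j))"
proof -
  have zero_at: "tidx_zero_at D n = tidx (D[n:=1])"
    using n unfolding tidx_zero_at_def tidx_def by (auto simp: nth_list_update)
  have "(\<Sum>is\<in>tidx D. f is) = (\<Sum>u\<in>tidx_zero_at D n. \<Sum>i<D!n. f (u[n:=i]))"
    unfolding zero_at by (rule sum_tidx_split_mode[OF n])
  also have "\<dots> = (\<Sum>j<unfold_cols D n. \<Sum>i<D!n. f (unfold_idx D n i j))"
    unfolding unfold_cols_mode_stride sum_unfold_idx_tidx_zero_at[symmetric] using n by simp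
  also have "\<dots> = (\<Sum>i<D!n. \<Sum>j<unfold_cols D n. f (unfold_idx D n i j))"
    by (rule sum.swap)
  finally show ?thesis .
qed

section \<open>Mode products of complex tensors\<close>

definition cmat_adj :: "(nat \<Rightarrow> nat \<Rightarrow> complex) \<Rightarrow> nat \<Rightarrow> nat \<Rightarrow> complex" where
  "cmat_adj U = (\<lambda>i j. cnj (U j i))"

definition cmode :: "nat \<Rightarrow> nat \<Rightarrow> (nat list \<Rightarrow> complex) \<Rightarrow> (nat \<Rightarrow> nat \<Rightarrow> complex) \<Rightarrow> nat list \<Rightarrow> complex" where
  "cmode d n X U = (\<lambda>is. \<Sum>r<d. X (is[n:=r]) * U (is!n) r)"

fun cmodes :: "nat list \<Rightarrow> (nat list \<Rightarrow> complex) \<Rightarrow> (nat \<Rightarrow> nat \<Rightarrow> nat \<Rightarrow> complex) \<Rightarrow> nat \<Rightarrow> nat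
    \<Rightarrow> nat list \<Rightarrow> complex" where
  "cmodes D X M lo 0 = X"
| "cmodes D X M lo (Suc k) = cmode (D!(lo+k)) (lo+k) (cmodes D X M lo k) (M (lo+k))"

definition frob_inner :: "nat list \<Rightarrow> (nat list \<Rightarrow> complex) \<Rightarrow> (nat list \<Rightarrow> complex) \<Rightarrow> complex" where
  "frob_inner D X Y = (\<Sum>is\<in>tidx D. X is * cnj (Y is))"

definition frob_sq :: "nat list \<Rightarrow> (nat list \<Rightarrow> complex) \<Rightarrow> real" where
  "frob_sq D X = (\<Sum>is\<in>tidx D. (cmod (X is))\<^sup>2)"

lemma cmode_commute:
  assumes "i \<noteq> j"
  shows "cmode d j (cmode e i X U) V = cmode e i (cmode d j X V) U"
proof (rule ext)
  fix xs
  show "cmode d j (cmode e i X U) V xs = cmode e i (cmode d j X V) U xs"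
    unfolding cmode_def using assms
    by (simp add: sum_distrib_left sum_distrib_right list_update_swap[of i j] mult_ac,
        subst sum.swap, simp add: mult_ac)
qed

lemma cmode_cmodes_commute:
  "j < lo \<or> lo + k \<le> j \<Longrightarrow> cmode d j (cmodes D X M lo k) V = cmodes D (cmode d j X V) M lo k"
proof (induction k)
  case (Suc k)
  then have "lo + k \<noteq> j" "j < lo \<or> lo + k \<le> j" by auto
  then show ?case using Suc.IH by (simp add: cmode_commute[of "lo + k" j])
qed simp

lemma cmodes_add: "cmodes D X M lo (a + b) = cmodes D (cmodes D X M (lo + a) b) M lo a"
proof (induction b)
  case (Suc b)
  have "cmodes D X M lo (a + Suc b)
      = cmode (D!(lo+a+b)) (lo+a+b) (cmodes D (cmodes D X M (lo + a) b) M lo a) (M (lo+a+b))"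
    using Suc by (simp add: add.assoc)
  also have "\<dots> = cmodes D (cmodes D X M (lo + a) (Suc b)) M lo a"
    by (simp add: cmode_cmodes_commute add.assoc)
  finally show ?case .
qed simp

lemma cmodes_cong_dims:
  "(\<And>k. k < m \<Longrightarrow> D!(lo+k) = E!(lo+k)) \<Longrightarrow> cmodes D X M lo m = cmodes E X M lo m"
  by (induction m) simp_all

lemma cmode_diff: "cmode d n (\<lambda>is. X is - Y is) U = (\<lambda>is. cmode d n X U is - cmode d n Y U is)"
  unfolding cmode_def by (simp add: algebra_simps sum_subtractf)

lemma cmodes_diff: "cmodes D (\<lambda>is. X is - Y is) M lo k = (\<lambda>is. cmodes D X M lo k is - cmodes D Y M lo k is)"
  by (induction k) (simp_all add: cmode_diff)

lemma cmode_cmode: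
  "n < length is \<Longrightarrow> cmode d' n (cmode d n X A) B is = cmode d n X (\<lambda>i s. \<Sum>r<d'. B i r * A r s) is"
  unfolding cmode_def by (simp add: sum_distrib_left sum_distrib_right mult_ac sum.swap[of _ "{..<d}"])

lemma cmode_update: "n < length u \<Longrightarrow> cmode d n X U (u[n:=i]) = (\<Sum>r<d. X (u[n:=r]) * U i r)"
  unfolding cmode_def by simp

lemma of_real_frob_sq: "complex_of_real (frob_sq D X) = frob_inner D X X"
  unfolding frob_sq_def frob_inner_def by (rule of_real_sum_norm_sq)

lemma frob_inner_commute: "frob_inner D Y X = cnj (frob_inner D X Y)"
  unfolding frob_inner_def by (simp add: mult.commute)

lemma frob_inner_cong: "(\<And>is. is \<in> tidx D \<Longrightarrow> Y is = Y' is) \<Longrightarrow> frob_inner D X Y = frob_inner D X Y'"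
  unfolding frob_inner_def by (intro sum.cong) auto

lemma frob_sq_add: "frob_sq D (\<lambda>is. X is + Y is) = frob_sq D X + frob_sq D Y + 2 * Re (frob_inner D X Y)"
proof -
  have "complex_of_real (frob_sq D (\<lambda>is. X is + Y is))
      = frob_inner D X X + frob_inner D Y Y + frob_inner D X Y + cnj (frob_inner D X Y)"
    unfolding of_real_frob_sq by (simp add: frob_inner_def algebra_simps sum.distrib)
  also have "\<dots> = complex_of_real (frob_sq D X + frob_sq D Y + 2 * Re (frob_inner D X Y))"
    by (simp add: of_real_frob_sq[symmetric] complex_add_cnj)
  finally show ?thesis using of_real_eq_iff by blast
qed

lemma frob_sq_orthogonal_add:
  "frob_inner D X Y = 0 \<Longrightarrow> frob_sq D (\<lambda>is. X is + Y is) = frob_sq D X + frob_sq D Y"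
  by (simp add: frob_sq_add)

lemma frob_inner_cmode:
  assumes n: "n < length D" and d: "D!n = d" and U: "orthonormal_cols {..<e} {..<d} U"
  shows "frob_inner (D[n:=e]) (cmode d n X U) (cmode d n Y U) = frob_inner D X Y"
proof -
  have "frob_inner (D[n:=e]) (cmode d n X U) (cmode d n Y U)
      = (\<Sum>u\<in>tidx (D[n:=1]). \<Sum>i<e. cmode d n X U (u[n:=i]) * cnj (cmode d n Y U (u[n:=i])))"
    unfolding frob_inner_def using sum_tidx_split_mode[of n "D[n:=e]"] n by simp
  also have "\<dots> = (\<Sum>u\<in>tidx (D[n:=1]). \<Sum>i<e. (\<Sum>r<d. U i r * X (u[n:=r])) * cnj (\<Sum>r<d. U i r * Y (u[n:=r])))"
    using n by (intro sum.cong refl) (simp add: tidx_length cmode_update mult.commute)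
  also have "\<dots> = (\<Sum>u\<in>tidx (D[n:=1]). \<Sum>r<d. X (u[n:=r]) * cnj (Y (u[n:=r])))"
    by (intro sum.cong refl orthonormal_cols_inner[OF _ U]) simp
  also have "\<dots> = frob_inner D X Y"
    unfolding frob_inner_def using sum_tidx_split_mode[OF n, of "\<lambda>is. X is * cnj (Y is)"] d by simp
  finally show ?thesis .
qed

lemma frob_sq_cmode_le:
  assumes n: "n < length D" and d: "D!n = d" and W: "orthonormal_cols {..<d} {..<e} W"
  shows "frob_sq (D[n:=e]) (cmode d n X (cmat_adj W)) \<le> frob_sq D X"
proof -
  have "frob_sq (D[n:=e]) (cmode d n X (cmat_adj W))
      = (\<Sum>u\<in>tidx (D[n:=1]). \<Sum>i<e. (cmod (cmode d n X (cmat_adj W) (u[n:=i])))\<^sup>2)"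
    unfolding frob_sq_def using sum_tidx_split_mode[of n "D[n:=e]"] n by simp
  also have "\<dots> = (\<Sum>u\<in>tidx (D[n:=1]). \<Sum>i<e. (cmod (\<Sum>s<d. cnj (W s i) * X (u[n:=s])))\<^sup>2)"
    using n by (intro sum.cong refl) (simp add: tidx_length cmode_update cmat_adj_def mult.commute)
  also have "\<dots> \<le> (\<Sum>u\<in>tidx (D[n:=1]). \<Sum>s<d. (cmod (X (u[n:=s])))\<^sup>2)"
    by (intro sum_mono orthonormal_cols_bessel[OF _ W]) simp
  also have "\<dots> = frob_sq D X"
    unfolding frob_sq_def using sum_tidx_split_mode[OF n, of "\<lambda>is. (cmod (X is))\<^sup>2"] d by simp
  finally show ?thesis .
qed

lemma frob_inner_cmode_adjoint:
  assumes n: "n < length D" and d: "D!n = d"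
  shows "frob_inner (D[n:=e]) (cmode d n X U) Y = frob_inner D X (cmode e n Y (cmat_adj U))"
proof -
  have "frob_inner (D[n:=e]) (cmode d n X U) Y
      = (\<Sum>u\<in>tidx (D[n:=1]). \<Sum>i<e. cmode d n X U (u[n:=i]) * cnj (Y (u[n:=i])))"
    unfolding frob_inner_def using sum_tidx_split_mode[of n "D[n:=e]"] n by simp
  also have "\<dots> = (\<Sum>u\<in>tidx (D[n:=1]). \<Sum>r<d. X (u[n:=r]) * cnj (cmode e n Y (cmat_adj U) (u[n:=r])))"
  proof (rule sum.cong[OF refl])
    fix u assume "u \<in> tidx (D[n:=1])"
    then have "n < length u" using tidx_length n by simp
    then show "(\<Sum>i<e. cmode d n X U (u[n:=i]) * cnj (Y (u[n:=i])))
        = (\<Sum>r<d. X (u[n:=r]) * cnj (cmode e n Y (cmat_adj U) (u[n:=r])))"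
      by (simp add: cmode_update cmat_adj_def sum_distrib_left sum_distrib_right mult_ac
          sum.swap[of _ "{..<e}"])
  qed
  also have "\<dots> = frob_inner D X (cmode e n Y (cmat_adj U))"
    unfolding frob_inner_def
    using sum_tidx_split_mode[OF n, of "\<lambda>is. X is * cnj (cmode e n Y (cmat_adj U) is)"] d by simp
  finally show ?thesis .
qed

lemma length_dims_after [simp]: "length (dims_after D F m) = length D"
  unfolding dims_after_def by simp

lemma nth_dims_after [simp]: "k < length D \<Longrightarrow> dims_after D F m ! k = (if k < m then F!k else D!k)"
  unfolding dims_after_def by simp

lemma dims_after_0 [simp]: "dims_after D F 0 = D"
  by (intro nth_equalityI) auto

lemma dims_after_Suc: "m < length D \<Longrightarrow> dims_after D F (Suc m) = (dims_after D F m)[m := F!m]"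
  by (intro nth_equalityI) (auto simp: nth_list_update)

lemma dims_after_Suc_restore: "m < length D \<Longrightarrow> (dims_after D F (Suc m))[m := D!m] = dims_after D F m"
  by (intro nth_equalityI) (auto simp: nth_list_update)

lemma dims_after_dims_after_self: "dims_after (dims_after D F m) D m = D"
  by (intro nth_equalityI) auto

lemma frob_inner_cmodes:
  assumes "m \<le> length D" and "\<And>k. k < m \<Longrightarrow> orthonormal_cols {..<F!k} {..<D!k} (M k)"
  shows "frob_inner (dims_after D F m) (cmodes D X M 0 m) (cmodes D Y M 0 m) = frob_inner D X Y"
  using assms
proof (induction m)
  case (Suc m)
  then have m: "m < length (dims_after D F m)" by simp
  have "frob_inner (dims_after D F (Suc m)) (cmodes D X M 0 (Suc m)) (cmodes D Y M 0 (Suc m))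
      = frob_inner (dims_after D F m) (cmodes D X M 0 m) (cmodes D Y M 0 m)"
    unfolding dims_after_Suc[OF Suc.prems(1)[THEN Suc_le_lessD]] cmodes.simps add_0
    by (rule frob_inner_cmode[OF m]) (use Suc.prems in auto)
  then show ?case using Suc by simp
qed simp

lemma frob_sq_cmodes_le:
  assumes "m \<le> length D" and "\<And>k. k < m \<Longrightarrow> orthonormal_cols {..<D!k} {..<F!k} (W k)"
  shows "frob_sq (dims_after D F m) (cmodes D X (\<lambda>k. cmat_adj (W k)) 0 m) \<le> frob_sq D X"
  using assms
proof (induction m)
  case (Suc m)
  then have m: "m < length (dims_after D F m)" by simp
  have "frob_sq (dims_after D F (Suc m)) (cmodes D X (\<lambda>k. cmat_adj (W k)) 0 (Suc m))
      \<le> frob_sq (dims_after D F m) (cmodes D X (\<lambda>k. cmat_adj (W k)) 0 m)"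
    unfolding dims_after_Suc[OF Suc.prems(1)[THEN Suc_le_lessD]] cmodes.simps add_0
    by (rule frob_sq_cmode_le[OF m]) (use Suc.prems in auto)
  then show ?case using Suc by simp
qed simp

lemma frob_sq_unfold:
  "n < length D \<Longrightarrow> frob_sq D X = mat_frob_sq (D!n) (unfold_cols D n) (\<lambda>i j. X (unfold_idx D n i j))"
  unfolding frob_sq_def mat_frob_sq_def by (rule sum_tidx_unfold)

lemma cmode_unfold_idx:
  "n < length D \<Longrightarrow> cmode d n X U (unfold_idx D n i j) = (\<Sum>r<d. U i r * X (unfold_idx D n r j))"
  unfolding cmode_def by (simp add: mult.commute)

lemma frob_sq_mode_proj_residual:
  assumes n: "n < length D"
  shows "frob_sq D (\<lambda>is. X is - cmode (D!n) n X (\<lambda>i s. \<Sum>l<r. W i l * cnj (W s l)) is)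
    = mat_frob_sq (D!n) (unfold_cols D n)
        (\<lambda>i j. X (unfold_idx D n i j) - (\<Sum>l<r. W i l * (\<Sum>s<D!n. cnj (W s l) * X (unfold_idx D n s j))))"
  unfolding frob_sq_unfold[OF n]
  by (simp add: cmode_unfold_idx[OF n] sum_distrib_left sum_distrib_right mult_ac sum.swap[of _ "{..<r}"])

text \<open>Every tensor of multilinear rank \<open>(I'\<^sub>1, \<dots>, I'\<^sub>N)\<close> has a mode-\<open>n\<close> unfolding of rank at most
  \<open>I'\<^sub>n\<close>, so Eckart--Young bounds its distance to the tensor from below by the tail of the
  mode-\<open>n\<close> singular values.\<close>
lemma mode_sv_tail_le_frob_sq:
  assumes n: "n < N" and lI: "length I = N"
    and svd: "is_svd (I!n) (unfold_cols I n) (\<lambda>i j. X (unfold_idx I n i j)) U S V"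
    and w: "orthonormal_cols {..<I!n} {..<I'!n} (w n)"
  shows "sv_tail S (I'!n) (min (I!n) (unfold_cols I n)) \<le> frob_sq I (\<lambda>is. X is - cmodes I' G w 0 N is)"
proof -
  define Z where "Z = cmodes I' (cmodes I' G w (Suc n) (N - Suc n)) w 0 n"
  have nI: "n < length I" using n lI by simp
  have "cmodes I' G w 0 N = cmode (I'!n) n Z (w n)"
    unfolding Z_def using cmodes_add[of I' G w 0 "Suc n" "N - Suc n"] n by simp
  moreover have "sv_tail S (I'!n) (min (I!n) (unfold_cols I n))
    \<le> mat_frob_sq (I!n) (unfold_cols I n)
        (\<lambda>i j. X (unfold_idx I n i j) - (\<Sum>l<I'!n. w n i l * Z (unfold_idx I n l j)))"
    by (rule eckart_young_tail_le[OF svd w])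
  ultimately show ?thesis
    by (simp add: frob_sq_unfold[OF nI] cmode_unfold_idx[OF nI])
qed

section \<open>Sequential truncation of a complex tensor\<close>

text \<open>One frontal slice of the ST-HOSVD, with 0-based modes: \<open>core n\<close> is \<open>a\<close> after the adjoint
  factors of the modes \<open>< n\<close> have been applied, \<open>uh n\<close> agrees with the leading \<open>I'\<^sub>n\<close> left singular
  vectors \<open>u n\<close> of its mode-\<open>n\<close> unfolding, and \<open>approx n\<close> expands \<open>core n\<close> back, so that
  \<open>approx 0 = a\<close> and \<open>approx N\<close> is the ST-HOSVD approximation.\<close>
locale st_hosvd_slice =
  fixes N :: nat and I I' :: "nat list" and a :: "nat list \<Rightarrow> complex"
    and uh :: "nat \<Rightarrow> nat \<Rightarrow> nat \<Rightarrow> complex"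
    and u t v :: "nat \<Rightarrow> nat \<Rightarrow> nat \<Rightarrow> complex"
  assumes length_I: "length I = N" and length_I': "length I' = N"
    and I'_le: "\<And>n. n < N \<Longrightarrow> I'!n \<le> I!n"
    and uh_eq: "\<And>n i j. n < N \<Longrightarrow> i < I!n \<Longrightarrow> j < I'!n \<Longrightarrow> uh n i j = u n i j"
    and svd_core: "\<And>n. n < N \<Longrightarrow> is_svd (I!n) (unfold_cols (dims_after I I' n) n)
        (\<lambda>i j. cmodes I a (\<lambda>k. cmat_adj (uh k)) 0 n (unfold_idx (dims_after I I' n) n i j))
        (u n) (t n) (v n)"
begin

abbreviation dims :: "nat \<Rightarrow> nat list" where
  "dims n \<equiv> dims_after I I' n"

definition core :: "nat \<Rightarrow> nat list \<Rightarrow> complex" where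
  "core n = cmodes I a (\<lambda>k. cmat_adj (uh k)) 0 n"

definition approx :: "nat \<Rightarrow> nat list \<Rightarrow> complex" where
  "approx n = cmodes I' (core n) uh 0 n"

definition resid :: "nat \<Rightarrow> nat list \<Rightarrow> complex" where
  "resid n = (\<lambda>is. core n is - cmode (I'!n) n (core (Suc n)) (uh n) is)"

definition trunc_err :: "nat \<Rightarrow> real" where
  "trunc_err n = sv_tail (t n) (I'!n) (min (I!n) (unfold_cols (dims n) n))"

lemma uh_orthonormal: "n < N \<Longrightarrow> orthonormal_cols {..<I!n} {..<I'!n} (uh n)"
proof -
  assume n: "n < N"
  have "orthonormal_cols {..<I!n} {..<I'!n} (u n)"
    using svd_core[OF n] I'_le[OF n] unfolding is_svd_def by (auto intro: unitary_on_orthonormal_cols)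
  then show ?thesis
    unfolding orthonormal_cols_def using uh_eq[OF n] by simp
qed

lemma core_Suc: "core (Suc n) = cmode (I!n) n (core n) (cmat_adj (uh n))"
  unfolding core_def by simp

lemma approx_0: "approx 0 = a"
  unfolding approx_def core_def by simp

lemma approx_diff: "(\<lambda>is. approx n is - approx (Suc n) is) = cmodes I' (resid n) uh 0 n"
proof -
  have "approx (Suc n) = cmodes I' (cmode (I'!n) n (core (Suc n)) (uh n)) uh 0 n"
    unfolding approx_def by (simp add: cmode_cmodes_commute)
  then show ?thesis unfolding approx_def resid_def by (simp add: cmodes_diff)
qed

lemma approx_rest:
  assumes n: "n < N"
  shows "(\<lambda>is. approx (Suc n) is - approx N is)
    = cmodes I' (cmode (I'!n) n (\<lambda>is. core (Suc n) is - cmodes I' (core N) uh (Suc n) (N - Suc n) is) (uh n)) uh 0 n"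
proof -
  have "approx N = cmodes I' (cmodes I' (core N) uh (Suc n) (N - Suc n)) uh 0 (Suc n)"
    unfolding approx_def using cmodes_add[of I' "core N" uh 0 "Suc n" "N - Suc n"] n by simp
  then show ?thesis
    unfolding approx_def by (simp add: cmodes_diff cmode_diff cmode_cmodes_commute)
qed

lemma frob_inner_approx:
  assumes n: "n \<le> N"
  shows "frob_inner I (cmodes I' X uh 0 n) (cmodes I' Y uh 0 n) = frob_inner (dims n) X Y"
proof -
  have "cmodes I' Z uh 0 n = cmodes (dims n) Z uh 0 n" for Z
    using n length_I by (intro cmodes_cong_dims) simp
  moreover have "frob_inner (dims_after (dims n) I n) (cmodes (dims n) X uh 0 n) (cmodes (dims n) Y uh 0 n)
      = frob_inner (dims n) X Y"
    using n length_I by (intro frob_inner_cmodes) (auto simp: uh_orthonormal)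
  ultimately show ?thesis by (simp add: dims_after_dims_after_self)
qed

lemma frob_sq_approx:
  "n \<le> N \<Longrightarrow> frob_sq I (cmodes I' X uh 0 n) = frob_sq (dims n) X"
  using frob_inner_approx[of n X X] by (metis of_real_frob_sq of_real_eq_iff)

lemma cmode_adj_resid:
  assumes n: "n < N" and xs: "xs \<in> tidx (dims (Suc n))"
  shows "cmode (I!n) n (resid n) (cmat_adj (uh n)) xs = 0"
proof -
  have l: "n < length xs" using tidx_length[OF xs] n length_I by simp
  have isn: "xs ! n < I'!n" using xs n length_I unfolding tidx_def by auto
  have "cmode (I!n) n (cmode (I'!n) n (core (Suc n)) (uh n)) (cmat_adj (uh n)) xs
      = cmode (I'!n) n (core (Suc n)) (\<lambda>i s. \<Sum>r<I!n. cnj (uh n r i) * uh n r s) xs"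
    unfolding cmode_cmode[OF l] cmat_adj_def ..
  also have "\<dots> = (\<Sum>s<I'!n. core (Suc n) (xs[n:=s]) * (if xs!n = s then 1 else 0))"
    unfolding cmode_def
    using orthonormal_colsD[OF uh_orthonormal[OF n]] isn by (intro sum.cong refl) simp
  also have "\<dots> = core (Suc n) xs"
    using isn by (simp add: if_distrib[of "\<lambda>x. _ * x"] cong: if_cong)
  finally show ?thesis unfolding resid_def cmode_diff core_Suc[symmetric] by simp
qed

lemma approx_steps_orthogonal:
  assumes n: "n < N"
  shows "frob_inner I (\<lambda>is. approx n is - approx (Suc n) is) (\<lambda>is. approx (Suc n) is - approx N is) = 0"
proof -
  define Q where "Q = (\<lambda>is. core (Suc n) is - cmodes I' (core N) uh (Suc n) (N - Suc n) is)"
  have "frob_inner I (\<lambda>is. approx n is - approx (Suc n) is) (\<lambda>is. approx (Suc n) is - approx N is)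
      = frob_inner (dims n) (resid n) (cmode (I'!n) n Q (uh n))"
    unfolding approx_diff approx_rest[OF n] Q_def using n by (simp add: frob_inner_approx)
  also have "\<dots> = cnj (frob_inner ((dims (Suc n))[n := I!n]) (cmode (I'!n) n Q (uh n)) (resid n))"
    using n length_I by (simp add: dims_after_Suc_restore frob_inner_commute[of _ "resid n"])
  also have "frob_inner ((dims (Suc n))[n := I!n]) (cmode (I'!n) n Q (uh n)) (resid n)
      = frob_inner (dims (Suc n)) Q (cmode (I!n) n (resid n) (cmat_adj (uh n)))"
    by (rule frob_inner_cmode_adjoint) (use n length_I in auto)
  also have "\<dots> = frob_inner (dims (Suc n)) Q (\<lambda>is. 0)"
    by (rule frob_inner_cong) (use cmode_adj_resid[OF n] in auto)
  finally show ?thesis by (simp add: frob_inner_def)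
qed

lemma frob_sq_resid:
  assumes n: "n < N"
  shows "frob_sq (dims n) (resid n) = trunc_err n"
proof -
  have nl: "n < length (dims n)" using n length_I by simp
  have "frob_sq (dims n) (resid n) = mat_frob_sq (I!n) (unfold_cols (dims n) n)
    (\<lambda>i j. core n (unfold_idx (dims n) n i j)
       - (\<Sum>l<I'!n. u n i l * (\<Sum>s<I!n. cnj (u n s l) * core n (unfold_idx (dims n) n s j))))"
    unfolding frob_sq_unfold[OF nl] mat_frob_sq_def resid_def core_Suc
  proof (intro sum.cong refl)
    fix i j assume i: "i \<in> {..<I!n}"
    have "cmode (I'!n) n (cmode (I!n) n (core n) (cmat_adj (uh n))) (uh n) (unfold_idx (dims n) n i j)
        = (\<Sum>l<I'!n. uh n i l * (\<Sum>s<I!n. cnj (uh n s l) * core n (unfold_idx (dims n) n s j)))"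
      by (simp add: cmode_unfold_idx[OF nl] cmat_adj_def)
    also have "\<dots> = (\<Sum>l<I'!n. u n i l * (\<Sum>s<I!n. cnj (u n s l) * core n (unfold_idx (dims n) n s j)))"
      using i uh_eq[OF n] by (intro sum.cong refl arg_cong2[where f = "(*)"]) auto
    finally show "(cmod (core n (unfold_idx (dims n) n i j)
        - cmode (I'!n) n (cmode (I!n) n (core n) (cmat_adj (uh n))) (uh n) (unfold_idx (dims n) n i j)))\<^sup>2
      = (cmod (core n (unfold_idx (dims n) n i j)
        - (\<Sum>l<I'!n. u n i l * (\<Sum>s<I!n. cnj (u n s l) * core n (unfold_idx (dims n) n s j)))))\<^sup>2"
      by simp
  qed (use n length_I in simp)
  also have "\<dots> = trunc_err n"
    unfolding trunc_err_def core_def by (rule is_svd_truncation_error[OF svd_core[OF n] I'_le[OF n]])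
  finally show ?thesis .
qed

text \<open>Pythagoras along the telescoping sum \<open>a - approx N = \<Sum>\<^sub>n (approx n - approx (n + 1))\<close>.\<close>
lemma frob_sq_error: "frob_sq I (\<lambda>is. a is - approx N is) = (\<Sum>n<N. trunc_err n)"
proof -
  have "frob_sq I (\<lambda>is. approx (N - k) is - approx N is) = (\<Sum>m\<in>{N-k..<N}. trunc_err m)" if "k \<le> N" for k
    using that
  proof (induction k)
    case (Suc k)
    define n where "n = N - Suc k"
    have n: "n < N" and sn: "Suc n = N - k" using Suc.prems unfolding n_def by auto
    have "frob_sq I (\<lambda>is. approx n is - approx N is)
        = frob_sq I (\<lambda>is. (approx n is - approx (Suc n) is) + (approx (Suc n) is - approx N is))"
      by simp
    also have "\<dots> = frob_sq I (\<lambda>is. approx n is - approx (Suc n) is) + frob_sq I (\<lambda>is. approx (Suc n) is - approx N is)"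
      by (rule frob_sq_orthogonal_add[OF approx_steps_orthogonal[OF n]])
    also have "frob_sq I (\<lambda>is. approx n is - approx (Suc n) is) = trunc_err n"
      unfolding approx_diff using n by (simp add: frob_sq_approx frob_sq_resid)
    also have "frob_sq I (\<lambda>is. approx (Suc n) is - approx N is) = (\<Sum>m\<in>{Suc n..<N}. trunc_err m)"
      using Suc sn by simp
    also have "trunc_err n + (\<Sum>m\<in>{Suc n..<N}. trunc_err m) = (\<Sum>m\<in>{n..<N}. trunc_err m)"
      using n by (simp add: sum.atLeast_Suc_lessThan)
    finally show ?case unfolding n_def .
  qed (simp add: frob_sq_def)
  from this[of N] show ?thesis by (simp add: approx_0 atLeast0LessThan)
qed

text \<open>The truncation error in mode \<open>n\<close> is at most the one obtained by truncating the mode-\<open>n\<close>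
  SVD of \<open>a\<close> itself: projecting with the first \<open>I'\<^sub>n\<close> left singular vectors \<open>uA\<close> of \<open>a\<^sub>(\<^sub>n\<^sub>)\<close>
  commutes with the contraction by the earlier factors, which can only decrease norms.\<close>
lemma trunc_err_le:
  assumes n: "n < N"
    and svd: "is_svd (I!n) (unfold_cols I n) (\<lambda>i j. a (unfold_idx I n i j)) uA sA vA"
  shows "trunc_err n \<le> sv_tail sA (I'!n) (min (I!n) (unfold_cols I n))"
proof -
  define r where "r = I'!n"
  define P where "P = (\<lambda>i s. \<Sum>l<r. uA i l * cnj (uA s l))"
  have nl: "n < length (dims n)" and nI: "n < length I" using n length_I by simp_all
  have uA: "orthonormal_cols {..<I!n} {..<r} uA"
    using svd I'_le[OF n] unfolding is_svd_def r_def by (auto intro: unitary_on_orthonormal_cols)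
  have "trunc_err n \<le> mat_frob_sq (I!n) (unfold_cols (dims n) n)
      (\<lambda>i j. core n (unfold_idx (dims n) n i j)
         - (\<Sum>l<r. uA i l * (\<Sum>s<I!n. cnj (uA s l) * core n (unfold_idx (dims n) n s j))))"
    unfolding trunc_err_def core_def r_def
    by (rule eckart_young_tail_le[OF svd_core[OF n] uA[unfolded r_def]])
  also have "\<dots> = frob_sq (dims n) (\<lambda>is. core n is - cmode (I!n) n (core n) P is)"
    unfolding P_def using frob_sq_mode_proj_residual[OF nl, where X = "core n" and r = r and W = uA] n length_I by simp
  also have "(\<lambda>is. core n is - cmode (I!n) n (core n) P is)
      = cmodes I (\<lambda>is. a is - cmode (I!n) n a P is) (\<lambda>k. cmat_adj (uh k)) 0 n"
    unfolding core_def by (simp add: cmodes_diff cmode_cmodes_commute)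
  also have "frob_sq (dims n) \<dots> \<le> frob_sq I (\<lambda>is. a is - cmode (I!n) n a P is)"
    using n length_I by (intro frob_sq_cmodes_le) (auto simp: uh_orthonormal)
  also have "\<dots> = sv_tail sA (I'!n) (min (I!n) (unfold_cols I n))"
    unfolding P_def frob_sq_mode_proj_residual[OF nI] r_def
    by (rule is_svd_truncation_error[OF svd I'_le[OF n]])
  finally show ?thesis .
qed

end

section \<open>The transform domain\<close>

lemma norm_vec_sq: "(norm (x :: complex^'p))\<^sup>2 = (\<Sum>k\<in>UNIV. (cmod (x$k))\<^sup>2)"
  by (simp add: norm_vec_def L2_set_def sum_nonneg)

locale scaled_unitary =
  fixes L W :: "complex^'p^'p" and c :: complex
  assumes c_nonzero: "c \<noteq> 0" and W_unitary: "unitary_mat W" and L_eq: "L = (\<chi> i j. c * W $ i $ j)"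
begin

lemma W_orthonormal:
  "(\<Sum>k\<in>UNIV. W $ i $ k * cadj W $ k $ j) = (if i = j then 1 else 0)"
  "(\<Sum>k\<in>UNIV. cadj W $ i $ k * W $ k $ j) = (if i = j then 1 else 0)"
proof -
  have "(W ** cadj W) $ i $ j = mat 1 $ i $ j" "(cadj W ** W) $ i $ j = mat 1 $ i $ j"
    using W_unitary unfolding unitary_mat_def by auto
  then show "(\<Sum>k\<in>UNIV. W $ i $ k * cadj W $ k $ j) = (if i = j then 1 else 0)"
       "(\<Sum>k\<in>UNIV. cadj W $ i $ k * W $ k $ j) = (if i = j then 1 else 0)"
    by (simp_all add: matrix_matrix_mult_def mat_def)
qed

lemma matrix_inv_L: "L ** matrix_inv L = mat 1" "matrix_inv L ** L = mat 1"
proof -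
  define B where "B = (\<chi> i j. inverse c * cadj W $ i $ j)"
  have cc: "\<And>X. c * (inverse c * X) = X" "\<And>X. inverse c * (c * X) = X"
    using c_nonzero by (simp_all add: mult.assoc[symmetric])
  have "L ** B = mat 1"
    unfolding L_eq B_def
    by (simp add: vec_eq_iff matrix_matrix_mult_def mat_def W_orthonormal(1)[symmetric]
        sum_distrib_left mult_ac cc)
  moreover have "B ** L = mat 1"
    unfolding L_eq B_def
    by (simp add: vec_eq_iff matrix_matrix_mult_def mat_def W_orthonormal(2)[symmetric]
        sum_distrib_left mult_ac cc)
  ultimately have "\<exists>B. L ** B = mat 1 \<and> B ** L = mat 1" by blast
  then have "L ** matrix_inv L = mat 1 \<and> matrix_inv L ** L = mat 1"
    unfolding matrix_inv_def by (rule someI_ex)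
  then show "L ** matrix_inv L = mat 1" "matrix_inv L ** L = mat 1" by auto
qed

lemma L_matrix_inv_apply: "L *v (matrix_inv L *v x) = x"
  by (simp add: matrix_vector_mul_assoc matrix_inv_L)

lemma L_inj: "L *v x = L *v y \<Longrightarrow> x = y"
  by (metis matrix_inv_L(2) matrix_vector_mul_assoc matrix_vector_mul_lid)

lemma L_tprod: "(L *v tprod L x y) $ k = (L *v x) $ k * (L *v y) $ k"
  unfolding tprod_def L_matrix_inv_apply by simp

lemma L_tconj: "(L *v tconj L x) $ k = cnj ((L *v x) $ k)"
  unfolding tconj_def L_matrix_inv_apply by simp

lemma L_tone: "(L *v tone L) $ k = 1"
  unfolding tone_def L_matrix_inv_apply by simp

lemma L_diff: "(L *v (x - y)) $ k = (L *v x) $ k - (L *v y) $ k"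
  by (simp add: matrix_vector_mult_diff_distrib)

lemma L_sum: "(L *v sum f S) $ k = (\<Sum>s\<in>S. (L *v f s) $ k)"
  by (simp add: linear_sum[OF matrix_vector_mul_linear])

lemma norm_L_sq: "(norm (L *v x))\<^sup>2 = (cmod c)\<^sup>2 * (norm x)\<^sup>2"
proof -
  have W: "orthonormal_cols UNIV UNIV (\<lambda>i j. W $ i $ j)"
    unfolding orthonormal_cols_def using W_orthonormal(2) by (simp add: cadj_def)
  have "(norm (L *v x))\<^sup>2 = (cmod c)\<^sup>2 * (\<Sum>i\<in>UNIV. (cmod (\<Sum>j\<in>UNIV. W $ i $ j * x $ j))\<^sup>2)"
    unfolding norm_vec_sq L_eq
    by (simp add: matrix_vector_mult_def sum_distrib_left[symmetric] mult.assoc norm_mult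
        power_mult_distrib)
  also have "(\<Sum>i\<in>UNIV. (cmod (\<Sum>j\<in>UNIV. W $ i $ j * x $ j))\<^sup>2) = (\<Sum>j\<in>UNIV. (cmod (x $ j))\<^sup>2)"
    by (rule orthonormal_cols_norm[OF _ W]) simp
  finally show ?thesis by (simp add: norm_vec_sq)
qed

lemma tube_eq_0: "(\<And>k. (L *v x) $ k = 0) \<Longrightarrow> x = 0"
  using L_inj[of x 0] by (simp add: vec_eq_iff)

definition tslice :: "'p \<Rightarrow> 'p ttensor \<Rightarrow> nat list \<Rightarrow> complex" where
  "tslice k X = (\<lambda>is. (L *v X is) $ k)"

lemma tslice_nmode: "tslice k (nmode L d n X U) = cmode d n (tslice k X) (slice L U k)"
  unfolding tslice_def nmode_def cmode_def slice_def by (simp add: L_sum L_tprod)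

lemma tslice_mmodes: "tslice k (mmodes L D X M m) = cmodes D (tslice k X) (\<lambda>j. slice L (M j) k) 0 m"
  by (induction m) (simp_all add: tslice_nmode)

lemma tslice_diff: "tslice k (\<lambda>is. X is - Y is) = (\<lambda>is. tslice k X is - tslice k Y is)"
  unfolding tslice_def by (simp add: L_diff)

lemma slice_tH: "slice L (tH L U) k = cmat_adj (slice L U k)"
  unfolding slice_def tH_def cmat_adj_def by (simp add: L_tconj)

lemma slice_unfold: "slice L (unfold D n X) k = (\<lambda>i j. tslice k X (unfold_idx D n i j))"
  unfolding slice_def unfold_def tslice_def ..

lemma slice_tmatmul: "slice L (tmatmul L K A B) k i j = (\<Sum>l<K. slice L A k i l * slice L B k l j)"
  unfolding slice_def tmatmul_def by (simp add: L_sum L_tprod)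

lemma slice_tident: "slice L (tident L) k i j = (if i = j then 1 else 0)"
  unfolding slice_def tident_def by (simp add: L_tone)

lemma tnorm_sq_eq_sum_tslices: "(cmod c)\<^sup>2 * (tnorm D X)\<^sup>2 = (\<Sum>k\<in>UNIV. frob_sq D (tslice k X))"
proof -
  have "(cmod c)\<^sup>2 * (tnorm D X)\<^sup>2 = (\<Sum>is\<in>tidx D. (norm (L *v X is))\<^sup>2)"
    unfolding tnorm_def by (simp add: sum_nonneg norm_L_sq sum_distrib_left)
  also have "\<dots> = (\<Sum>k\<in>UNIV. frob_sq D (tslice k X))"
    unfolding tslice_def frob_sq_def norm_vec_sq by (rule sum.swap)
  finally show ?thesis .
qed

lemma tsvd_slice: "tsvd L I J A U S V \<Longrightarrow> is_svd I J (slice L A k) (slice L U k) (slice L S k) (slice L V k)"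
  unfolding tsvd_def by blast

lemma trank_le_min: "trank I J S \<le> min I J"
  unfolding trank_def by (rule order.trans[OF card_mono[of "{..<min I J}"]]) auto

text \<open>The singular tubes of a t-SVD vanish from the t-rank on, because in every slice the
  singular values are nonincreasing.\<close>
lemma tsvd_diag_eq_0:
  assumes ts: "tsvd L I J A U S V" and i: "trank I J S \<le> i" "i < min I J"
  shows "S i i = 0"
proof (rule ccontr)
  assume nz: "S i i \<noteq> 0"
  have "S j j \<noteq> 0" if ji: "j \<le> i" for j
  proof
    assume "S j j = 0"
    then have "\<And>k. (L *v S i i) $ k = 0"
      using is_svd_diag_zero_mono[OF tsvd_slice[OF ts] _ ji i(2)] unfolding slice_def by simp
    with nz show False using tube_eq_0 by blast
  qed
  then have "{..i} \<subseteq> {i. i < min I J \<and> S i i \<noteq> 0}" using i(2) by auto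
  then have "card {..i} \<le> trank I J S"
    unfolding trank_def by (intro card_mono) auto
  then show False using i(1) by simp
qed

lemma sum_sv_tail_slices:
  assumes ts: "tsvd L I J A U S V" and r: "r \<le> trank I J S"
  shows "(\<Sum>k\<in>UNIV. sv_tail (slice L S k) r (min I J)) = (cmod c)\<^sup>2 * sv_tail S r (trank I J S)"
proof -
  have "(\<Sum>k\<in>UNIV. sv_tail (slice L S k) r (min I J)) = (cmod c)\<^sup>2 * sv_tail S r (min I J)"
    unfolding sv_tail_def slice_def
    by (subst sum.swap) (simp add: norm_vec_sq[symmetric] norm_L_sq sum_distrib_left)
  also have "sv_tail S r (min I J) = sv_tail S r (trank I J S)"
  proof -
    have "{r..<min I J} = {r..<trank I J S} \<union> {trank I J S..<min I J}"
      using r trank_le_min[of I J S] by auto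
    moreover have "(\<Sum>i\<in>{trank I J S..<min I J}. (norm (S i i))\<^sup>2) = 0"
      using tsvd_diag_eq_0[OF ts] by (intro sum.neutral) auto
    ultimately show ?thesis unfolding sv_tail_def by (simp add: sum.union_disjoint ivl_disj_int)
  qed
  finally show ?thesis .
qed

lemma orthonormal_cols_slice:
  assumes "\<forall>i<r. \<forall>j<r. tmatmul L K (tH L U) U i j = tident L i j"
  shows "orthonormal_cols {..<K} {..<r} (slice L U k)"
  unfolding orthonormal_cols_def
proof (intro ballI)
  fix a b assume "a \<in> {..<r}" "b \<in> {..<r}"
  then have "slice L (tmatmul L K (tH L U) U) k a b = slice L (tident L) k a b"
    using assms by (simp add: slice_def)
  then show "(\<Sum>i<K. cnj (slice L U k i a) * slice L U k i b) = (if a = b then 1 else 0)"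
    unfolding slice_tmatmul slice_tident slice_tH cmat_adj_def .
qed

lemma st_hosvd_slice_tslice:
  fixes I I' :: "nat list" and A :: "'p ttensor" and Uhat UU SS VV :: "nat \<Rightarrow> 'p tmat"
  assumes "length I = N" and "length I' = N" and "\<And>n. n < N \<Longrightarrow> I'!n \<le> I!n"
    and tsY: "\<And>n. n < N \<Longrightarrow> tsvd L (I!n) (unfold_cols (dims_after I I' n) n)
        (unfold (dims_after I I' n) n (mmodes L I A (\<lambda>k. tH L (Uhat k)) n)) (UU n) (SS n) (VV n)"
    and Uhat: "\<And>n i j. n < N \<Longrightarrow> i < I!n \<Longrightarrow> j < I'!n \<Longrightarrow> Uhat n i j = UU n i j"
  shows "st_hosvd_slice N I I' (tslice k A) (\<lambda>n. slice L (Uhat n) k) (\<lambda>n. slice L (UU n) k)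
    (\<lambda>n. slice L (SS n) k) (\<lambda>n. slice L (VV n) k)"
proof
  show "slice L (Uhat n) k i j = slice L (UU n) k i j" if "n < N" "i < I!n" "j < I'!n" for n i j
    using Uhat[OF that] unfolding slice_def by simp
  show "is_svd (I!n) (unfold_cols (dims_after I I' n) n)
      (\<lambda>i j. cmodes I (tslice k A) (\<lambda>j. cmat_adj (slice L (Uhat j) k)) 0 n
        (unfold_idx (dims_after I I' n) n i j))
      (slice L (UU n) k) (slice L (SS n) k) (slice L (VV n) k)" if "n < N" for n
    using tsvd_slice[OF tsY[OF that]] unfolding slice_unfold tslice_mmodes slice_tH .
qed (use assms in auto)

lemma st_hosvd_error_sq_le:
  fixes I I' :: "nat list" and A :: "'p ttensor" and Uhat Uu Ss Vv UU SS VV :: "nat \<Rightarrow> 'p tmat"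
  assumes lI: "length I = N" and lI': "length I' = N"
    and tsA: "\<And>n. n < N \<Longrightarrow> tsvd L (I!n) (unfold_cols I n) (unfold I n A) (Uu n) (Ss n) (Vv n)"
    and rank: "\<And>n. n < N \<Longrightarrow> I'!n \<le> trank (I!n) (unfold_cols I n) (Ss n)"
    and tsY: "\<And>n. n < N \<Longrightarrow> tsvd L (I!n) (unfold_cols (dims_after I I' n) n)
        (unfold (dims_after I I' n) n (mmodes L I A (\<lambda>k. tH L (Uhat k)) n)) (UU n) (SS n) (VV n)"
    and Uhat: "\<And>n i j. n < N \<Longrightarrow> i < I!n \<Longrightarrow> j < I'!n \<Longrightarrow> Uhat n i j = UU n i j"
  shows "(tnorm I (\<lambda>is. A is - mmodes L I' (mmodes L I A (\<lambda>k. tH L (Uhat k)) N) Uhat N is))\<^sup>2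
    \<le> (\<Sum>n<N. sv_tail (Ss n) (I'!n) (trank (I!n) (unfold_cols I n) (Ss n)))"
proof -
  define Ahat where "Ahat = mmodes L I' (mmodes L I A (\<lambda>k. tH L (Uhat k)) N) Uhat N"
  define K where "K n = min (I!n) (unfold_cols I n)" for n
  have I'_le: "I'!n \<le> I!n" if "n < N" for n
    using rank[OF that] trank_le_min[of "I!n"] by (meson min.boundedE order.trans)
  have slice_err: "frob_sq I (tslice k (\<lambda>is. A is - Ahat is))
      \<le> (\<Sum>n<N. sv_tail (slice L (Ss n) k) (I'!n) (K n))" for k
  proof -
    interpret st_hosvd_slice N I I' "tslice k A" "\<lambda>n. slice L (Uhat n) k" "\<lambda>n. slice L (UU n) k"
      "\<lambda>n. slice L (SS n) k" "\<lambda>n. slice L (VV n) k"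
      by (rule st_hosvd_slice_tslice[OF lI lI' I'_le tsY Uhat])
    have "tslice k Ahat = approx N"
      unfolding approx_def core_def Ahat_def tslice_mmodes slice_tH ..
    then have "frob_sq I (tslice k (\<lambda>is. A is - Ahat is)) = (\<Sum>n<N. trunc_err n)"
      unfolding tslice_diff by (simp add: frob_sq_error)
    also have "\<dots> \<le> (\<Sum>n<N. sv_tail (slice L (Ss n) k) (I'!n) (K n))"
    proof (rule sum_mono)
      fix n assume "n \<in> {..<N}"
      then show "trunc_err n \<le> sv_tail (slice L (Ss n) k) (I'!n) (K n)"
        unfolding K_def using tsvd_slice[OF tsA, of n k]
        by (intro trunc_err_le[where uA = "slice L (Uu n) k" and vA = "slice L (Vv n) k"])
          (simp_all add: slice_unfold)
    qed
    finally show ?thesis .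
  qed
  have "(cmod c)\<^sup>2 * (tnorm I (\<lambda>is. A is - Ahat is))\<^sup>2
      \<le> (\<Sum>k\<in>UNIV. \<Sum>n<N. sv_tail (slice L (Ss n) k) (I'!n) (K n))"
    unfolding tnorm_sq_eq_sum_tslices by (rule sum_mono) (rule slice_err)
  also have "\<dots> = (cmod c)\<^sup>2 * (\<Sum>n<N. sv_tail (Ss n) (I'!n) (trank (I!n) (unfold_cols I n) (Ss n)))"
    unfolding K_def
    by (subst sum.swap) (simp add: sum_sv_tail_slices[OF tsA rank] sum_distrib_left)
  finally show ?thesis
    unfolding Ahat_def using c_nonzero by simp
qed

lemma sv_tail_le_best_error_sq:
  fixes I I' :: "nat list" and A S :: "'p ttensor" and Uu Ss Vv Ws :: "nat \<Rightarrow> 'p tmat"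
  assumes n: "n < N" and lI: "length I = N"
    and tsA: "tsvd L (I!n) (unfold_cols I n) (unfold I n A) (Uu n) (Ss n) (Vv n)"
    and rank: "I'!n \<le> trank (I!n) (unfold_cols I n) (Ss n)"
    and Ws: "\<forall>i<I'!n. \<forall>j<I'!n. tmatmul L (I!n) (tH L (Ws n)) (Ws n) i j = tident L i j"
  shows "sv_tail (Ss n) (I'!n) (trank (I!n) (unfold_cols I n) (Ss n))
    \<le> (tnorm I (\<lambda>is. A is - mmodes L I' S Ws N is))\<^sup>2"
proof -
  have "(cmod c)\<^sup>2 * sv_tail (Ss n) (I'!n) (trank (I!n) (unfold_cols I n) (Ss n))
      = (\<Sum>k\<in>UNIV. sv_tail (slice L (Ss n) k) (I'!n) (min (I!n) (unfold_cols I n)))"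
    by (rule sum_sv_tail_slices[OF tsA rank, symmetric])
  also have "\<dots> \<le> (\<Sum>k\<in>UNIV. frob_sq I (tslice k (\<lambda>is. A is - mmodes L I' S Ws N is)))"
  proof (rule sum_mono)
    fix k
    show "sv_tail (slice L (Ss n) k) (I'!n) (min (I!n) (unfold_cols I n))
      \<le> frob_sq I (tslice k (\<lambda>is. A is - mmodes L I' S Ws N is))"
      unfolding tslice_diff tslice_mmodes
      using tsvd_slice[OF tsA, of k] unfolding slice_unfold
      by (rule mode_sv_tail_le_frob_sq[where w = "\<lambda>j. slice L (Ws j) k",
            OF n lI _ orthonormal_cols_slice[OF Ws]])
  qed
  also have "\<dots> = (cmod c)\<^sup>2 * (tnorm I (\<lambda>is. A is - mmodes L I' S Ws N is))\<^sup>2"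
    by (rule tnorm_sq_eq_sum_tslices[symmetric])
  finally show ?thesis using c_nonzero by simp
qed

end

lemma tnorm_nonneg: "0 \<le> tnorm D X"
  unfolding tnorm_def by (simp add: sum_nonneg)

theorem theorem5p5:
  fixes L W :: "complex^'p^'p" and c :: complex
    and N :: nat and I I' :: "nat list"
    and A :: "'p ttensor"
    and Uu Ss Vv :: "nat \<Rightarrow> 'p tmat"
    and UU SS VV :: "nat \<Rightarrow> 'p tmat"
    and S :: "'p ttensor" and Ws :: "nat \<Rightarrow> 'p tmat"
  defines "Uhat \<equiv> (\<lambda>n i j. if i < I ! n \<and> j < I' ! n then UU n i j else 0)"
  defines "R \<equiv> (\<lambda>n. trank (I ! n) (unfold_cols I n) (Ss n))"
  defines "Shat \<equiv> mmodes L I A (\<lambda>k. tH L (Uhat k)) N"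
  defines "Ahat \<equiv> mmodes L I' Shat Uhat N"
  assumes "c \<noteq> 0" and "unitary_mat W" and "L = (\<chi> i j. c * W $ i $ j)"
    and "length I = N" and "length I' = N"
    and "\<And>n. n < N \<Longrightarrow> tsvd L (I ! n) (unfold_cols I n) (unfold I n A) (Uu n) (Ss n) (Vv n)"
    and "\<And>n. n < N \<Longrightarrow> 1 \<le> I' ! n \<and> I' ! n \<le> R n"
    and "\<And>n. n < N \<Longrightarrow> tsvd L (I ! n) (unfold_cols (dims_after I I' n) n)
              (unfold (dims_after I I' n) n (mmodes L I A (\<lambda>k. tH L (Uhat k)) n))
              (UU n) (SS n) (VV n)"
    and "\<And>n. n < N \<Longrightarrow> \<forall>i < I' ! n. \<forall>j < I' ! n.
              tmatmul L (I ! n) (tH L (Ws n)) (Ws n) i j = tident L i j"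
  shows "tnorm I (\<lambda>is. A is - Ahat is)
           \<le> sqrt (\<Sum>n<N. \<Sum>i\<in>{I' ! n..<R n}. (norm (Ss n i i))\<^sup>2)
       \<and> sqrt (\<Sum>n<N. \<Sum>i\<in>{I' ! n..<R n}. (norm (Ss n i i))\<^sup>2)
           \<le> sqrt (real N) * tnorm I (\<lambda>is. A is - mmodes L I' S Ws N is)"
proof -
  interpret scaled_unitary L W c
    using assms(5-7) by unfold_locales
  define T where "T n = sv_tail (Ss n) (I'!n) (R n)" for n
  define E where "E = tnorm I (\<lambda>is. A is - mmodes L I' S Ws N is)"
  have "(tnorm I (\<lambda>is. A is - Ahat is))\<^sup>2 \<le> (\<Sum>n<N. T n)"
    unfolding T_def R_def Ahat_def Shat_def
    by (rule st_hosvd_error_sq_le) (use assms(8-12) in \<open>auto simp: Uhat_def R_def\<close>)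
  moreover have "T n \<le> E\<^sup>2" if "n < N" for n
    unfolding T_def R_def E_def
    by (rule sv_tail_le_best_error_sq) (use assms(8-13) that in \<open>auto simp: R_def\<close>)
  then have "sqrt (\<Sum>n<N. T n) \<le> sqrt (real N * E\<^sup>2)"
    by (simp add: sum_mono[of "{..<N}" T "\<lambda>_. E\<^sup>2", simplified])
  ultimately show ?thesis
    unfolding T_def E_def sv_tail_def
    by (simp add: real_le_rsqrt real_sqrt_mult tnorm_nonneg)
qed

end
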